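(* Suppose Assumptions (A1)–(A3) hold. Let $a<1/U_L$ and $$\lambda:=\sqrt{\frac{8\sigma}{c\,a\,n^{2/3}}\big[\ln(n^{1/3}p)+\tilde\zeta\big]}.$$ Let $\hat\beta\in\mathbb R^p$ with $\|\hat\beta\|_\infty\le R$ satisfy S$^3$ONC$(\mathbf Z_1^n)$ almost surely. There are universal constants $\tilde c,C_3,C_4>0$ such that: (i) For any $\Gamma\ge0$, assume $$n>C_3\Big[\Big(\tfrac{\Gamma+\hat\varepsilon}{\sigma}\Big)^3+s\big(\ln(n^{1/3}p)+\tilde\zeta\big)\Big]$$ and assume $\mathcal L_{n,\lambda}(\hat\beta,\mathbf Z_1^n)\le\mathcal L_{n,\lambda}(\beta^*_{\hat\varepsilon},\mathbf Z_1^n)+\Gamma$ almost surely. Then, with probability at least $1-2(p+1)e^{-\tilde cn}-6e^{-2cn^{1/3}}$, $$\mathbb L(\hat\beta)-\mathbb L(\beta^* )\le C_3\sigma\Big[\tfrac{s(\ln(n^{1/3}p)+\tilde\zeta)}{n^{2/3}}+\sqrt{\tfrac{s(\ln(n^{1/3}p)+\tilde\zeta)}{n}}+\tfrac1{n^{1/3}}\Big]+C_3\sqrt{\tfrac{\sigma(\Gamma+\hat\varepsilon)}{n^{1/3}}}+\Gamma+\hat\varepsilon.$$ (ii) Assume $$n>C_4\Big(\tfrac{\hat\varepsilon}{\sigma}\Big)^3+C_4\,a^{-1}\big[\ln(n^{1/3}p)+\tilde\zeta\big]s^{3/2}R^{3/2}$$ and assume $\mathcal L_{n,\lambda}(\hat\beta,\mathbf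 Z_1^n)\le\mathcal L_{n,\lambda}(\hat\beta^{\ell_1},\mathbf Z_1^n)$ almost surely. Then, with probability at least $1-2(p+1)e^{-\tilde cn}-6e^{-2cn^{1/3}}$, $$\mathbb L(\hat\beta)-\mathbb L(\beta^* )\le C_4a^{-1/2}s\sigma\Big[\tfrac{\ln(n^{1/3}p)+\tilde\zeta}{n^{2/3}}+\tfrac{R\sqrt{\ln(n^{1/3}p)+\tilde\zeta}}{n^{1/3}}\Big]+C_4\sqrt{\tfrac{\sigma\hat\varepsilon}{n^{1/3}}}+\hat\varepsilon.$$
   Context: Standing setup. Let $Z_1,\dots,Z_n$ be i.i.d. random samples with support $\mathcal W\subseteq\mathbb R^q$, and write $\mathbf Z_1^n=(Z_1,\dots,Z_n)$. Let $L:\mathbb R^p\times\mathcal W\to\mathbb R$ (with $p>2$) be measurable and deterministic. Define $\mathcal L_n(\beta,\mathbf Z_1^n)=\frac1n\sum_{i=1}^nL(\beta,Z_i)$ and $\mathbb L(\beta)=\mathbb E[\mathcal L_n(\beta,\mathbf Z_1^n)]$. Let $\beta^*\in\arg\min_{\beta\in\mathbb R^p}\mathbb L(\beta)$, with $\|\beta^*\|_\infty\le R$ for some $R\ge1$. Assume $L(\cdot,z)$ is continuously differentiable for a.e. $z$, with coordinatewise Lipschitz partial derivatives of constant $U_L\ge1$: $$\Big|\partial_{\beta_j}\mathcal L_n(\tilde\beta+\delta e_j,z)-\partial_{\beta_j}\mathcal L_n(\tilde\beta,z)\Big|\le U_L|\delta|\quad\text{for all }\tilde\beta,\ \delta,\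 j,\ \text{a.e. } z.$$ Penalty. For $\lambda,a>0$, $P_\lambda(\theta)=\int_0^\theta\frac{[a\lambda-t]_+}{a}\,dt$ ($\theta\ge0$), and $\mathcal L_{n,\lambda}(\beta,\mathbf Z_1^n)=\mathcal L_n(\beta,\mathbf Z_1^n)+\sum_jP_\lambda(|\beta_j|)$. Notation. $|\cdot|$ on vectors is the $\ell_1$ norm, $\|\cdot\|$ is the Euclidean norm, and $\|\cdot\|_0$ counts nonzero entries. (A1) (A-sparsity). There is $\beta^*_{\hat\varepsilon}$ with $\|\beta^*_{\hat\varepsilon}\|_\infty\le R$, $s:=\|\beta^*_{\hat\varepsilon}\|_0\ge1$ and $\mathbb L(\beta^*_{\hat\varepsilon})-\mathbb L(\beta^* )\le\hat\varepsilon$, for some $\hat\varepsilon\ge0$. (A2). For every $\beta$, the variables $L(\beta,Z_i)-\mathbb EL(\beta,Z_i)$ are independent and sub-exponential with $\psi_1$-norm $\le\sigma$ ($\sigma\ge1$). Hence there is an absolute constant $c\in(0,0.5]$ with $$\mathbb P\Big(\Big|\sum_ia_i\{L(\beta,Z_i)-\mathbb EL(\beta,Z_i)\}\Big|>\sigma(\|\mathbf a\|\sqrt t+\|\mathbf a\|_\infty t)\Big)\le 2e^{-ct}\quad\text{for all } t\ge0,\ \mathbf a\in\mathbb R^n.$$ (A3). There is a measurable deterministic $\mathcal C:\mathcal W\to\mathbb R_+$ with $\|\mathcal C(Z_i)-\mathbb E\mathcal C(Z_i)\|_{\psi_1}\le\sigma_L$ ($\sigma_L\ge1$), $\mathbb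 E|\mathcal C(Z_i)|\le\mathcal C_\mu$ ($\mathcal C_\mu\ge1$), and $|L(\beta_1,z)-L(\beta_2,z)|\le\mathcal C(z)\|\beta_1-\beta_2\|$ for all $\beta_1,\beta_2$ and a.e. $z$. S$^3$ONC. A vector $\hat\beta$ satisfies S$^3$ONC$(\mathbf Z_1^n)$ if both of the following hold. (a) There exist $g_j$, with $g_j=P_\lambda'(|\hat\beta_j|)\operatorname{sign}(\hat\beta_j)$ if $\hat\beta_j\ne0$ and $g_j\in[-\lambda,\lambda]$ if $\hat\beta_j=0$, such that $\partial_{\beta_j}\mathcal L_n(\hat\beta,\mathbf Z_1^n)+g_j=0$ for all $j$. (b) For every $j$ with $|\hat\beta_j|\in(0,a\lambda)$, $U_L+P_\lambda''(|\hat\beta_j|)\ge0$. Further notation. $\tilde\zeta:=\ln(3eR(\sigma_L+\mathcal C_\mu))$, and $\hat\beta^{\ell_1}\in\arg\min_\beta\{\mathcal L_n(\beta,\mathbf Z_1^n)+\lambda|\beta|\}$. *)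

theory Defs
  imports "HOL-Probability.Probability"
begin

text \<open>Vectors of R^p are represented as functions nat => real vanishing from index p on.
  This keeps the dimension p a term (not a type), so that the universal constants of the
  theorem can be quantified before p.\<close>

definition vecs :: "nat \<Rightarrow> (nat \<Rightarrow> real) set" where
  "vecs p = {b. \<forall>j\<ge>p. b j = 0}"

definition l2norm :: "nat \<Rightarrow> (nat \<Rightarrow> real) \<Rightarrow> real" where
  "l2norm p b = sqrt (\<Sum>j<p. (b j)\<^sup>2)"

definition l1norm :: "nat \<Rightarrow> (nat \<Rightarrow> real) \<Rightarrow> real" where
  "l1norm p b = (\<Sum>j<p. \<bar>b j\<bar>)"

definition linfnorm :: "nat \<Rightarrow> (nat \<Rightarrow> real) \<Rightarrow> real" where
  "linfnorm p b = Max ((\<lambda>j. \<bar>b j\<bar>) ` {..<p})"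

definition l0norm :: "nat \<Rightarrow> (nat \<Rightarrow> real) \<Rightarrow> nat" where
  "l0norm p b = card {j. j < p \<and> b j \<noteq> 0}"

definition partial_deriv :: "((nat \<Rightarrow> real) \<Rightarrow> real) \<Rightarrow> (nat \<Rightarrow> real) \<Rightarrow> nat \<Rightarrow> real" where
  "partial_deriv f b j = deriv (\<lambda>t. f (b(j := b j + t))) 0"

definition C1_vecs :: "nat \<Rightarrow> ((nat \<Rightarrow> real) \<Rightarrow> real) \<Rightarrow> bool" where
  "C1_vecs p f \<longleftrightarrow> (\<exists>G. (\<forall>b\<in>vecs p. G b \<in> vecs p) \<and>
     (\<forall>b\<in>vecs p. \<forall>e>0. \<exists>d>0. \<forall>h\<in>vecs p. l2norm p h < d \<longrightarrow>
        \<bar>f (\<lambda>k. b k + h k) - f b - (\<Sum>j<p. G b j * h j)\<bar> \<le> e * l2norm p h) \<and>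
     (\<forall>b\<in>vecs p. \<forall>e>0. \<exists>d>0. \<forall>b'\<in>vecs p. l2norm p (\<lambda>k. b' k - b k) < d \<longrightarrow>
        l2norm p (\<lambda>k. G b' k - G b k) < e))"

definition Pen :: "real \<Rightarrow> real \<Rightarrow> real \<Rightarrow> real" where
  "Pen lam a \<theta> = integral {0..\<theta>} (\<lambda>t. max (a * lam - t) 0 / a)"

definition emp_loss :: "nat \<Rightarrow> ((nat \<Rightarrow> real) \<Rightarrow> 'w \<Rightarrow> real) \<Rightarrow> (nat \<Rightarrow> 'm \<Rightarrow> 'w) \<Rightarrow> 'm
    \<Rightarrow> (nat \<Rightarrow> real) \<Rightarrow> real" where
  "emp_loss n L Z \<omega> b = (1 / real n) * (\<Sum>i<n. L b (Z i \<omega>))"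

definition pop_loss :: "'m measure \<Rightarrow> nat \<Rightarrow> ((nat \<Rightarrow> real) \<Rightarrow> 'w \<Rightarrow> real) \<Rightarrow> (nat \<Rightarrow> 'm \<Rightarrow> 'w)
    \<Rightarrow> (nat \<Rightarrow> real) \<Rightarrow> real" where
  "pop_loss M n L Z b = (\<integral>\<omega>. emp_loss n L Z \<omega> b \<partial>M)"

definition pen_loss :: "nat \<Rightarrow> real \<Rightarrow> real \<Rightarrow> nat \<Rightarrow> ((nat \<Rightarrow> real) \<Rightarrow> 'w \<Rightarrow> real)
    \<Rightarrow> (nat \<Rightarrow> 'm \<Rightarrow> 'w) \<Rightarrow> 'm \<Rightarrow> (nat \<Rightarrow> real) \<Rightarrow> real" where
  "pen_loss p lam a n L Z \<omega> b = emp_loss n L Z \<omega> b + (\<Sum>j<p. Pen lam a \<bar>b j\<bar>)"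

definition S3ONC :: "nat \<Rightarrow> real \<Rightarrow> real \<Rightarrow> real \<Rightarrow> ((nat \<Rightarrow> real) \<Rightarrow> real) \<Rightarrow> (nat \<Rightarrow> real) \<Rightarrow> bool" where
  "S3ONC p UL lam a f b \<longleftrightarrow>
     (\<exists>g::nat \<Rightarrow> real. \<forall>j<p.
        (b j \<noteq> 0 \<longrightarrow> g j = deriv (Pen lam a) \<bar>b j\<bar> * sgn (b j)) \<and>
        (b j = 0 \<longrightarrow> g j \<in> {-lam..lam}) \<and>
        partial_deriv f b j + g j = 0) \<and>
     (\<forall>j<p. \<bar>b j\<bar> \<in> {0<..<a * lam} \<longrightarrow> UL + deriv (deriv (Pen lam a)) \<bar>b j\<bar> \<ge> 0)"

definition psi1_norm :: "'m measure \<Rightarrow> ('m \<Rightarrow> real) \<Rightarrow> ereal" where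
  "psi1_norm M X = Inf (ereal ` {t. t > 0 \<and> (\<integral>\<^sup>+\<omega>. ennreal (exp (\<bar>X \<omega>\<bar> / t)) \<partial>M) \<le> 2})"

end

theory Submission
  imports Defs
begin

text \<open>On an event of probability at least \<open>1 - 2 exp (- c n) - 4 exp (- 2 c n^(1/3))\<close> the
  empirical loss is uniformly close to the population loss on the cube of radius \<open>R\<close>, with an
  error that grows with the number of nonzero coordinates. At the points \<open>g\<close> of a fine grid
  this is the sub-exponential tail bound at confidence level
  \<open>2 n^(1/3) + l0norm g * ln (2 p * #grid values) / c\<close>; counting grid points by their
  sparsity, the failure probabilities sum to at most \<open>4 exp (- 2 c n^(1/3))\<close>. Every other point
  of the cube lies within \<open>1 / (n (\<sigma>L + C\<mu>))\<close> of a grid point of no larger support, and the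
  Lipschitz condition transfers the bound.

  The second-order part of S3ONC excludes coordinates in \<open>(0, a lam)\<close>, where the penalty is
  strictly concave, so the penalty of the estimator is exactly \<open>l0norm bhat * a lam^2 / 2\<close>;
  with the chosen \<open>lam\<close> it absorbs the sparsity-dependent part of the deviation at the
  estimator. Comparing penalized empirical losses with those of \<open>beps\<close> (respectively of the
  Lasso solution, whose penalty is at most \<open>lam\<close> times its l1 norm) bounds the excess risk.\<close>

section \<open>The minimax concave penalty\<close>

lemma Pen_eq_below_threshold:
  assumes a: "a > 0" and "0 \<le> \<theta>" and "\<theta> \<le> a * lam"
  shows "Pen lam a \<theta> = lam * \<theta> - \<theta>\<^sup>2 / (2 * a)"
proof -
  have "integral {0..\<theta>} (\<lambda>t. max (a * lam - t) 0 / a) = integral {0..\<theta>} (\<lambda>t. lam - t / a)"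
  proof (rule integral_cong)
    fix t assume "t \<in> {0..\<theta>}"
    then have "max (a * lam - t) 0 = a * lam - t" using assms(3) by auto
    then show "max (a * lam - t) 0 / a = lam - t / a" using a by (simp add: field_simps)
  qed
  moreover have "((\<lambda>t. lam - t / a) has_integral
      ((lam * \<theta> - \<theta>\<^sup>2 / (2 * a)) - (lam * 0 - 0\<^sup>2 / (2 * a)))) {0..\<theta>}"
  proof (rule fundamental_theorem_of_calculus[OF assms(2)])
    fix x assume "x \<in> {0..\<theta>}"
    have "((\<lambda>t. lam * t - t\<^sup>2 / (2 * a)) has_real_derivative (lam - x / a)) (at x within {0..\<theta>})"
      using a by (auto intro!: derivative_eq_intros simp: field_simps power2_eq_square)
    then show "((\<lambda>t. lam * t - t\<^sup>2 / (2 * a)) has_vector_derivative (lam - x / a))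
        (at x within {0..\<theta>})"
      by (simp add: has_real_derivative_iff_has_vector_derivative)
  qed
  ultimately show ?thesis unfolding Pen_def by (simp add: integral_unique)
qed

lemma Pen_eq_above_threshold:
  assumes a: "a > 0" and "lam \<ge> 0" and "a * lam \<le> \<theta>"
  shows "Pen lam a \<theta> = a * lam\<^sup>2 / 2"
proof -
  let ?f = "\<lambda>t. max (a * lam - t) 0 / a"
  have al: "0 \<le> a * lam" using assms by simp
  have "?f integrable_on {0..\<theta>}"
    by (rule integrable_continuous_interval) (intro continuous_intros, use a in auto)
  then have "integral {0..a * lam} ?f + integral {a * lam..\<theta>} ?f = integral {0..\<theta>} ?f"
    by (rule Henstock_Kurzweil_Integration.integral_combine[OF al assms(3)])
  moreover have "integral {a * lam..\<theta>} ?f = integral {a * lam..\<theta>} (\<lambda>t. 0)"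
    by (rule integral_cong) auto
  moreover have "integral {0..a * lam} ?f = lam * (a * lam) - (a * lam)\<^sup>2 / (2 * a)"
    using Pen_eq_below_threshold[OF a al order_refl] unfolding Pen_def .
  ultimately show ?thesis unfolding Pen_def using a by (simp add: power2_eq_square field_simps)
qed

lemma Pen_0 [simp]: "Pen lam a 0 = 0"
  unfolding Pen_def by simp

lemma Pen_le_linear:
  assumes a: "a > 0" and lam: "lam \<ge> 0" and "0 \<le> \<theta>"
  shows "Pen lam a \<theta> \<le> lam * \<theta>"
proof (cases "\<theta> \<le> a * lam")
  case True
  then show ?thesis using Pen_eq_below_threshold[OF a assms(3) True] a by simp
next
  case False
  then have "a * lam * lam \<le> \<theta> * lam" using lam by (intro mult_right_mono) auto
  moreover have "0 \<le> a * lam * lam" using a lam by simp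
  ultimately show ?thesis using Pen_eq_above_threshold[OF a lam, of \<theta>] False
    by (simp add: power2_eq_square algebra_simps)
qed

lemma Pen_le_cap:
  assumes a: "a > 0" and lam: "lam \<ge> 0" and "0 \<le> \<theta>"
  shows "Pen lam a \<theta> \<le> a * lam\<^sup>2 / 2"
proof (cases "\<theta> \<le> a * lam")
  case True
  have "0 \<le> (a * lam - \<theta>)\<^sup>2" by simp
  then have "lam * \<theta> - \<theta>\<^sup>2 / (2 * a) \<le> a * lam\<^sup>2 / 2" using a
    by (simp add: field_simps power2_eq_square)
  then show ?thesis using Pen_eq_below_threshold[OF a assms(3) True] by simp
next
  case False
  then show ?thesis using Pen_eq_above_threshold[OF a lam] by simp
qed

lemma deriv2_Pen_below_threshold:
  assumes a: "a > 0" and x: "0 < x" "x < a * lam"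
  shows "deriv (deriv (Pen lam a)) x = - 1 / a"
proof -
  let ?S = "{0<..<a * lam}"
  have deriv_Pen: "deriv (Pen lam a) y = lam - y / a" if y: "y \<in> ?S" for y
  proof -
    have "((\<lambda>t. lam * t - t\<^sup>2 / (2 * a)) has_real_derivative (lam - y / a)) (at y)"
      using a by (auto intro!: derivative_eq_intros simp: field_simps power2_eq_square)
    then have "(Pen lam a has_real_derivative (lam - y / a)) (at y)"
      by (rule has_field_derivative_transform_within_open[where S = ?S])
        (use y Pen_eq_below_threshold[OF a] in auto)
    then show ?thesis by (rule DERIV_imp_deriv)
  qed
  have "((\<lambda>t. lam - t / a) has_real_derivative (- 1 / a)) (at x)"
    using a by (auto intro!: derivative_eq_intros simp: field_simps)
  then have "(deriv (Pen lam a) has_real_derivative (- 1 / a)) (at x)"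
    by (rule has_field_derivative_transform_within_open[where S = ?S]) (use x deriv_Pen in auto)
  then show ?thesis by (rule DERIV_imp_deriv)
qed

lemma S3ONC_support_ge_threshold:
  assumes a: "a > 0" and aUL: "a * UL < 1" and S: "S3ONC p UL lam a f b"
    and j: "j < p" "b j \<noteq> 0"
  shows "a * lam \<le> \<bar>b j\<bar>"
proof (rule ccontr)
  assume "\<not> a * lam \<le> \<bar>b j\<bar>"
  then have bj: "\<bar>b j\<bar> \<in> {0<..<a * lam}" using j by auto
  then have "UL + deriv (deriv (Pen lam a)) \<bar>b j\<bar> \<ge> 0" using S j unfolding S3ONC_def by blast
  moreover have "deriv (deriv (Pen lam a)) \<bar>b j\<bar> = - 1 / a"
    using deriv2_Pen_below_threshold[OF a] bj by simp
  ultimately have "1 \<le> a * UL" using a by (simp add: field_simps)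
  then show False using aUL by simp
qed

lemma sum_nonzero_eq_l0norm:
  "(\<Sum>j<p. if b j \<noteq> 0 then v else 0) = real (l0norm p b) * (v :: real)"
proof -
  have "(\<Sum>j<p. if b j \<noteq> 0 then v else 0) = (\<Sum>j\<in>{j. j < p \<and> b j \<noteq> 0}. v)"
    by (subst sum.inter_filter[symmetric]) (auto intro!: sum.cong)
  then show ?thesis unfolding l0norm_def by simp
qed

lemma S3ONC_penalty_eq:
  assumes a: "a > 0" and lam: "lam \<ge> 0" and "a * UL < 1" and "S3ONC p UL lam a f b"
  shows "(\<Sum>j<p. Pen lam a \<bar>b j\<bar>) = real (l0norm p b) * (a * lam\<^sup>2 / 2)"
proof -
  have "Pen lam a \<bar>b j\<bar> = (if b j \<noteq> 0 then a * lam\<^sup>2 / 2 else 0)" if "j < p" for j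
    using S3ONC_support_ge_threshold[OF a assms(3,4) that] Pen_eq_above_threshold[OF a lam] by auto
  then show ?thesis by (simp add: sum_nonzero_eq_l0norm)
qed

lemma penalty_le_l0norm:
  assumes "a > 0" and "lam \<ge> 0"
  shows "(\<Sum>j<p. Pen lam a \<bar>b j\<bar>) \<le> real (l0norm p b) * (a * lam\<^sup>2 / 2)"
proof -
  have "(\<Sum>j<p. Pen lam a \<bar>b j\<bar>) \<le> (\<Sum>j<p. if b j \<noteq> 0 then a * lam\<^sup>2 / 2 else 0)"
    by (rule sum_mono) (use Pen_le_cap[OF assms] in auto)
  then show ?thesis by (simp add: sum_nonzero_eq_l0norm)
qed

lemma penalty_le_l1norm:
  assumes "a > 0" and "lam \<ge> 0"
  shows "(\<Sum>j<p. Pen lam a \<bar>b j\<bar>) \<le> lam * l1norm p b"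
proof -
  have "(\<Sum>j<p. Pen lam a \<bar>b j\<bar>) \<le> (\<Sum>j<p. lam * \<bar>b j\<bar>)"
    by (rule sum_mono) (rule Pen_le_linear[OF assms], simp)
  then show ?thesis unfolding l1norm_def by (simp add: sum_distrib_left)
qed

lemma abs_le_linfnorm: "j < p \<Longrightarrow> \<bar>b j\<bar> \<le> linfnorm p b"
  unfolding linfnorm_def by (intro Max_ge) auto

lemma l1norm_le_l0norm_linfnorm: "l1norm p b \<le> real (l0norm p b) * linfnorm p b"
proof -
  have "l1norm p b \<le> (\<Sum>j<p. if b j \<noteq> 0 then linfnorm p b else 0)"
    unfolding l1norm_def by (rule sum_mono) (use abs_le_linfnorm in auto)
  then show ?thesis by (simp add: sum_nonzero_eq_l0norm)
qed

section \<open>Grids and rounding\<close>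

definition grid :: "nat \<Rightarrow> real set \<Rightarrow> (nat \<Rightarrow> real) set" where
  "grid p V = {g. (\<forall>j\<ge>p. g j = 0) \<and> (\<forall>j<p. g j \<in> V)}"

lemma grid_subset_vecs: "grid p V \<subseteq> vecs p"
  unfolding grid_def vecs_def by auto

lemma grid_Suc: "grid (Suc p) V = (\<lambda>(v, g). g(p := v)) ` (V \<times> grid p V)"
proof (intro set_eqI iffI)
  fix h assume h: "h \<in> grid (Suc p) V"
  then have "h(p := 0) \<in> grid p V" "h p \<in> V" unfolding grid_def by (auto simp: less_Suc_eq)
  then show "h \<in> (\<lambda>(v, g). g(p := v)) ` (V \<times> grid p V)"
    by (intro image_eqI[where x = "(h p, h(p := 0))"]) auto
next
  fix h assume "h \<in> (\<lambda>(v, g). g(p := v)) ` (V \<times> grid p V)"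
  then show "h \<in> grid (Suc p) V" unfolding grid_def by (auto simp: less_Suc_eq)
qed

lemma inj_on_grid_Suc: "inj_on (\<lambda>(v, g). g(p := v)) (V \<times> grid p V)"
proof (rule inj_onI, clarsimp)
  fix v g v' g'
  assume "g \<in> grid p V" "g' \<in> grid p V" "g(p := v) = g'(p := v')"
  moreover have "g p = 0" "g' p = 0" using calculation unfolding grid_def by auto
  ultimately show "v = v' \<and> g = g'"
    by (metis fun_upd_eqD fun_upd_idem fun_upd_upd)
qed

lemma finite_grid: "finite V \<Longrightarrow> finite (grid p V)"
proof (induction p)
  case 0
  have "grid 0 V = {\<lambda>_. 0}" unfolding grid_def by auto
  then show ?case by simp
next
  case (Suc p)
  then show ?case unfolding grid_Suc by simp
qed

lemma l0norm_fun_upd: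
  assumes "g p = 0"
  shows "l0norm (Suc p) (g(p := v)) = l0norm p g + (if v = 0 then 0 else 1)"
proof -
  have "{j. j < Suc p \<and> (g(p := v)) j \<noteq> 0} = {j. j < p \<and> g j \<noteq> 0} \<union> (if v = 0 then {} else {p})"
    using assms by (auto simp: less_Suc_eq)
  then show ?thesis unfolding l0norm_def by auto
qed

lemma sum_grid_power_l0norm:
  fixes x :: real
  assumes V: "finite V" "0 \<in> V"
  shows "(\<Sum>g\<in>grid p V. x ^ l0norm p g) = (1 + x * (real (card V) - 1)) ^ p"
proof (induction p)
  case 0
  have "grid 0 V = {\<lambda>_. 0}" unfolding grid_def by auto
  then show ?case by (simp add: l0norm_def)
next
  case (Suc p)
  have coordinate: "(\<Sum>v\<in>V. if v = 0 then 1 else x) = 1 + x * (real (card V) - 1)"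
  proof -
    have "(\<Sum>v\<in>V. if v = 0 then 1 else x) = 1 + (\<Sum>v\<in>V - {0}. x)"
      using V by (simp add: sum.remove)
    moreover have "card V \<ge> 1" using V by (auto simp: Suc_le_eq card_gt_0_iff)
    then have "real (card (V - {0})) = real (card V) - 1"
      using V by (simp add: card_Diff_singleton of_nat_diff)
    ultimately show ?thesis by (simp add: mult.commute)
  qed
  have "(\<Sum>h\<in>grid (Suc p) V. x ^ l0norm (Suc p) h)
      = (\<Sum>(v, g)\<in>V \<times> grid p V. x ^ l0norm (Suc p) (g(p := v)))"
    unfolding grid_Suc by (subst sum.reindex[OF inj_on_grid_Suc]) (simp add: case_prod_beta')
  also have "\<dots> = (\<Sum>(v, g)\<in>V \<times> grid p V. (if v = 0 then 1 else x) * x ^ l0norm p g)"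
    by (rule sum.cong) (auto simp: l0norm_fun_upd grid_def power_add)
  also have "\<dots> = (\<Sum>v\<in>V. if v = 0 then 1 else x) * (\<Sum>g\<in>grid p V. x ^ l0norm p g)"
    by (simp add: sum_product sum.cartesian_product case_prod_beta)
  finally show ?case using Suc coordinate by simp
qed

definition round_grid :: "real \<Rightarrow> real \<Rightarrow> real" where
  "round_grid \<delta> y = sgn y * \<delta> * of_int \<lfloor>\<bar>y\<bar> / \<delta>\<rfloor>"

definition grid_values :: "real \<Rightarrow> real \<Rightarrow> real set" where
  "grid_values \<delta> R = (\<lambda>k. \<delta> * of_int k) ` {- \<lfloor>R / \<delta>\<rfloor>..\<lfloor>R / \<delta>\<rfloor>}"

lemma round_grid_0 [simp]: "round_grid \<delta> 0 = 0"
  by (simp add: round_grid_def)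

lemma abs_diff_round_grid_le:
  assumes d: "\<delta> > 0"
  shows "\<bar>y - round_grid \<delta> y\<bar> \<le> \<delta>"
proof -
  let ?k = "\<lfloor>\<bar>y\<bar> / \<delta>\<rfloor>"
  have "\<delta> * of_int ?k \<le> \<bar>y\<bar>"
    using mult_left_mono[OF of_int_floor_le[of "\<bar>y\<bar> / \<delta>"], of \<delta>] d by simp
  moreover have "\<bar>y\<bar> / \<delta> < of_int ?k + 1" by linarith
  then have "\<bar>y\<bar> < \<delta> * of_int ?k + \<delta>" using d by (simp add: pos_divide_less_eq algebra_simps)
  moreover have "\<bar>y - round_grid \<delta> y\<bar> = \<bar>\<bar>y\<bar> - \<delta> * of_int ?k\<bar>"
    unfolding round_grid_def by (cases y "0::real" rule: linorder_cases) (auto simp: algebra_simps)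
  ultimately show ?thesis by linarith
qed

lemma round_grid_in_grid_values:
  assumes d: "\<delta> > 0" and y: "\<bar>y\<bar> \<le> R"
  shows "round_grid \<delta> y \<in> grid_values \<delta> R"
proof -
  define k where "k = \<lfloor>\<bar>y\<bar> / \<delta>\<rfloor>"
  have "0 \<le> k" unfolding k_def using d by simp
  moreover have "k \<le> \<lfloor>R / \<delta>\<rfloor>" unfolding k_def using d y by (intro floor_mono divide_right_mono) auto
  ultimately have "(if y \<ge> 0 then k else - k) \<in> {- \<lfloor>R / \<delta>\<rfloor>..\<lfloor>R / \<delta>\<rfloor>}" by auto
  moreover have "round_grid \<delta> y = \<delta> * of_int (if y \<ge> 0 then k else - k)"
    unfolding round_grid_def k_def by (cases "y = 0") auto
  ultimately show ?thesis unfolding grid_values_def by (rule rev_image_eqI)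
qed

lemma finite_grid_values: "finite (grid_values \<delta> R)"
  unfolding grid_values_def by simp

lemma zero_in_grid_values: "\<delta> > 0 \<Longrightarrow> R \<ge> 0 \<Longrightarrow> 0 \<in> grid_values \<delta> R"
  unfolding grid_values_def by (intro image_eqI[where x = 0]) auto

lemma card_grid_values_le:
  assumes "\<delta> > 0" and "R \<ge> 0"
  shows "real (card (grid_values \<delta> R)) \<le> 2 * R / \<delta> + 1"
proof -
  have "card (grid_values \<delta> R) \<le> card {- \<lfloor>R / \<delta>\<rfloor>..\<lfloor>R / \<delta>\<rfloor>}"
    unfolding grid_values_def by (rule card_image_le) simp
  then have "real (card (grid_values \<delta> R)) \<le> real (nat (2 * \<lfloor>R / \<delta>\<rfloor> + 1))" by simp
  also have "\<dots> = 2 * of_int \<lfloor>R / \<delta>\<rfloor> + 1" using assms by simp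
  also have "\<dots> \<le> 2 * (R / \<delta>) + 1" using of_int_floor_le[of "R / \<delta>"] by linarith
  finally show ?thesis by simp
qed

definition net_point :: "real \<Rightarrow> nat \<Rightarrow> (nat \<Rightarrow> real) \<Rightarrow> nat \<Rightarrow> real" where
  "net_point \<delta> p b = (\<lambda>j. if j < p then round_grid \<delta> (b j) else 0)"

lemma net_point_in_grid:
  "\<delta> > 0 \<Longrightarrow> linfnorm p b \<le> R \<Longrightarrow> net_point \<delta> p b \<in> grid p (grid_values \<delta> R)"
  unfolding grid_def net_point_def
  by (auto intro: round_grid_in_grid_values order_trans[OF abs_le_linfnorm])

lemma l0norm_net_point_le: "l0norm p (net_point \<delta> p b) \<le> l0norm p b"
  unfolding l0norm_def net_point_def by (intro card_mono) auto

lemma l2norm_diff_net_point_le: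
  assumes d: "\<delta> > 0"
  shows "l2norm p (\<lambda>j. b j - net_point \<delta> p b j) \<le> sqrt (real p) * \<delta>"
proof -
  have "(\<Sum>j<p. (b j - net_point \<delta> p b j)\<^sup>2) \<le> (\<Sum>j<p. \<delta>\<^sup>2)"
  proof (rule sum_mono)
    fix j assume "j \<in> {..<p}"
    then have "\<bar>b j - net_point \<delta> p b j\<bar> \<le> \<delta>"
      unfolding net_point_def using abs_diff_round_grid_le[OF d] by simp
    then show "(b j - net_point \<delta> p b j)\<^sup>2 \<le> \<delta>\<^sup>2"
      by (metis abs_ge_zero power2_abs power_mono)
  qed
  then have "l2norm p (\<lambda>j. b j - net_point \<delta> p b j) \<le> sqrt (real p * \<delta>\<^sup>2)"
    unfolding l2norm_def by simp
  then show ?thesis using d by (simp add: real_sqrt_mult)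
qed

lemma measure_UN_grid_le:
  assumes M: "prob_space M" and V: "finite V" "0 \<in> V"
    and B: "\<And>g. g \<in> grid p V \<Longrightarrow> B g \<in> sets M"
    and tail: "\<And>g. g \<in> grid p V \<Longrightarrow> measure M (B g) \<le> K * x ^ l0norm p g"
    and K: "K \<ge> 0" and x: "x \<ge> 0" "x * (real (card V) - 1) * real p \<le> 1 / 2"
  shows "measure M (\<Union>g\<in>grid p V. B g) \<le> 2 * K"
proof -
  interpret prob_space M by (rule M)
  have "card V \<ge> 1" using V by (auto simp: Suc_le_eq card_gt_0_iff)
  then have y: "0 \<le> x * (real (card V) - 1)" using x by simp
  have "(1 + x * (real (card V) - 1)) ^ p \<le> exp (x * (real (card V) - 1)) ^ p"
    using y by (intro power_mono) (auto simp: exp_ge_add_one_self)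
  also have "\<dots> \<le> exp (1 / 2)"
    using x by (simp flip: exp_of_nat_mult add: mult.commute)
  also have "\<dots> \<le> 2"
  proof -
    have "exp (1 / 2 :: real) ^ 2 = exp 1" by (simp flip: exp_of_nat_mult)
    also have "\<dots> \<le> 2 ^ 2" using exp_le by simp
    finally show ?thesis by (rule power2_le_imp_le) simp
  qed
  finally have count: "(1 + x * (real (card V) - 1)) ^ p \<le> 2" .
  have "measure M (\<Union>g\<in>grid p V. B g) \<le> (\<Sum>g\<in>grid p V. measure M (B g))"
    using B finite_grid[OF V(1)] by (intro finite_measure_subadditive_finite) auto
  also have "\<dots> \<le> (\<Sum>g\<in>grid p V. K * x ^ l0norm p g)"
    by (rule sum_mono) (rule tail)
  also have "\<dots> = K * (1 + x * (real (card V) - 1)) ^ p"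
    by (simp add: sum_distrib_left[symmetric] sum_grid_power_l0norm[OF V])
  also have "\<dots> \<le> 2 * K" using count K by (simp add: mult.commute mult_left_mono)
  finally show ?thesis .
qed

lemma AE_refine_event:
  assumes "A \<in> sets M" and "AE \<omega> in M. Q \<omega>"
  obtains A' where "A' \<in> sets M" "A' \<subseteq> A" "measure M A' = measure M A" "\<forall>\<omega>\<in>A'. Q \<omega>"
proof -
  obtain N where N: "\<And>\<omega>. \<omega> \<in> space M - N \<Longrightarrow> Q \<omega>" "N \<in> null_sets M"
    using assms(2) by (rule AE_E3) blast
  show ?thesis
  proof
    show "A - N \<in> sets M" using assms(1) N(2) by auto
    show "measure M (A - N) = measure M A" using assms(1) N(2) by (rule measure_Diff_null_set)
    show "\<forall>\<omega>\<in>A - N. Q \<omega>" using N(1) sets.sets_into_space[OF assms(1)] by blast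
  qed auto
qed

lemma measurable_loss_comp:
  assumes "Z \<in> measurable M borel" and "(\<lambda>(b, z). L b z) \<in> borel_measurable (borel \<Otimes>\<^sub>M borel)"
  shows "(\<lambda>\<omega>. L b (Z \<omega>)) \<in> borel_measurable M"
proof -
  have "(\<lambda>\<omega>. (b, Z \<omega>)) \<in> M \<rightarrow>\<^sub>M borel \<Otimes>\<^sub>M borel"
    using assms(1) by (intro measurable_Pair measurable_const) simp
  from measurable_comp[OF this assms(2)] show ?thesis by (simp add: comp_def)
qed

definition avg_dev :: "nat \<Rightarrow> 'm measure \<Rightarrow> (nat \<Rightarrow> 'm \<Rightarrow> real) \<Rightarrow> 'm \<Rightarrow> real" where
  "avg_dev n M X \<omega> = \<bar>\<Sum>i<n. (X i \<omega> - (\<integral>\<omega>'. X i \<omega>' \<partial>M)) / real n\<bar>"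

lemma borel_measurable_avg_dev:
  "\<forall>i<n. X i \<in> borel_measurable M \<Longrightarrow> avg_dev n M X \<in> borel_measurable M"
  unfolding avg_dev_def by (intro borel_measurable_abs borel_measurable_sum) auto

lemma sets_avg_dev_gt:
  "\<forall>i<n. X i \<in> borel_measurable M \<Longrightarrow> {\<omega>\<in>space M. T < avg_dev n M X \<omega>} \<in> sets M"
  using borel_measurable_avg_dev unfolding borel_measurable_iff_greater by blast

lemma measure_avg_dev_gt_le:
  fixes X :: "nat \<Rightarrow> 'm \<Rightarrow> real"
  assumes tail: "\<forall>t\<ge>0. \<forall>v :: nat \<Rightarrow> real.
      measure M {\<omega>\<in>space M. \<bar>\<Sum>i<n. v i * (X i \<omega> - (\<integral>\<omega>'. X i \<omega>' \<partial>M))\<bar>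
        > s * (sqrt (\<Sum>i<n. (v i)\<^sup>2) * sqrt t + Max ((\<lambda>i. \<bar>v i\<bar>) ` {..<n}) * t)}
      \<le> 2 * exp (- c * t)"
    and n: "n \<ge> 1" and t: "t \<ge> 0"
  shows "measure M {\<omega>\<in>space M. s * (sqrt (t / real n) + t / real n) < avg_dev n M X \<omega>}
    \<le> 2 * exp (- c * t)"
proof -
  have "sqrt (\<Sum>i<n. (1 / real n)\<^sup>2) * sqrt t = sqrt (t / real n)"
    using n by (simp add: power2_eq_square real_sqrt_divide)
  moreover have "Max ((\<lambda>i. \<bar>1 / real n\<bar>) ` {..<n}) = 1 / real n"
    using n by (subst image_constant[of 0]) auto
  ultimately have "measure M {\<omega>\<in>space M. \<bar>\<Sum>i<n. 1 / real n * (X i \<omega> - (\<integral>\<omega>'. X i \<omega>' \<partial>M))\<bar>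
      > s * (sqrt (t / real n) + 1 / real n * t)} \<le> 2 * exp (- c * t)"
    using tail[rule_format, OF t, of "\<lambda>_. 1 / real n"] by simp
  then show ?thesis unfolding avg_dev_def by simp
qed

lemma abs_emp_minus_pop_loss:
  assumes "\<forall>i<n. integrable M (\<lambda>\<omega>. L b (Z i \<omega>))"
  shows "\<bar>emp_loss n L Z \<omega> b - pop_loss M n L Z b\<bar> = avg_dev n M (\<lambda>i \<omega>. L b (Z i \<omega>)) \<omega>"
  using assms unfolding pop_loss_def emp_loss_def avg_dev_def
  by (simp add: integral_sum sum_divide_distrib sum_subtractf diff_divide_distrib)

lemma pop_loss_lipschitz:
  assumes "\<forall>i<n. integrable M (\<lambda>\<omega>. L b (Z i \<omega>))" "\<forall>i<n. integrable M (\<lambda>\<omega>. L b' (Z i \<omega>))"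
    and Cf: "\<forall>i<n. integrable M (\<lambda>\<omega>. Cf (Z i \<omega>))" "\<forall>i<n. (\<integral>\<omega>. \<bar>Cf (Z i \<omega>)\<bar> \<partial>M) \<le> C\<mu>"
    and Lip: "\<forall>i<n. AE \<omega> in M. \<bar>L b (Z i \<omega>) - L b' (Z i \<omega>)\<bar> \<le> Cf (Z i \<omega>) * d"
    and n: "n \<ge> 1" and d: "d \<ge> 0"
  shows "\<bar>pop_loss M n L Z b - pop_loss M n L Z b'\<bar> \<le> C\<mu> * d"
proof -
  have "\<bar>\<integral>\<omega>. L b (Z i \<omega>) - L b' (Z i \<omega>) \<partial>M\<bar> \<le> C\<mu> * d" if i: "i < n" for i
  proof -
    have "\<bar>\<integral>\<omega>. L b (Z i \<omega>) - L b' (Z i \<omega>) \<partial>M\<bar> \<le> (\<integral>\<omega>. \<bar>L b (Z i \<omega>) - L b' (Z i \<omega>)\<bar> \<partial>M)"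
      by (rule integral_abs_bound)
    also have "\<dots> \<le> (\<integral>\<omega>. Cf (Z i \<omega>) * d \<partial>M)"
      by (rule integral_mono_AE) (use i assms in auto)
    also have "\<dots> = (\<integral>\<omega>. Cf (Z i \<omega>) \<partial>M) * d" by simp
    also have "\<dots> \<le> (\<integral>\<omega>. \<bar>Cf (Z i \<omega>)\<bar> \<partial>M) * d"
      using i Cf(1) d by (intro mult_right_mono integral_mono) auto
    also have "\<dots> \<le> C\<mu> * d" using i Cf(2) d by (simp add: mult_right_mono)
    finally show ?thesis .
  qed
  then have "\<bar>\<Sum>i<n. \<integral>\<omega>. L b (Z i \<omega>) - L b' (Z i \<omega>) \<partial>M\<bar> \<le> (\<Sum>i<n. C\<mu> * d)"
    by (intro order_trans[OF sum_abs] sum_mono) auto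
  moreover have "pop_loss M n L Z b - pop_loss M n L Z b'
      = (\<Sum>i<n. \<integral>\<omega>. L b (Z i \<omega>) - L b' (Z i \<omega>) \<partial>M) / real n"
    using assms(1,2) unfolding pop_loss_def emp_loss_def
    by (simp add: integral_sum sum_subtractf diff_divide_distrib)
  ultimately show ?thesis using n by (simp add: divide_le_eq mult.commute)
qed

lemma emp_loss_lipschitz:
  assumes "\<forall>i<n. \<bar>L b (Z i \<omega>) - L b' (Z i \<omega>)\<bar> \<le> Cf (Z i \<omega>) * d"
  shows "\<bar>emp_loss n L Z \<omega> b - emp_loss n L Z \<omega> b'\<bar> \<le> (\<Sum>i<n. Cf (Z i \<omega>)) / real n * d"
proof -
  have "\<bar>\<Sum>i<n. L b (Z i \<omega>) - L b' (Z i \<omega>)\<bar> \<le> (\<Sum>i<n. Cf (Z i \<omega>) * d)"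
    using assms by (intro order_trans[OF sum_abs] sum_mono) auto
  moreover have "emp_loss n L Z \<omega> b - emp_loss n L Z \<omega> b'
      = (\<Sum>i<n. L b (Z i \<omega>) - L b' (Z i \<omega>)) / real n"
    unfolding emp_loss_def by (simp add: sum_subtractf diff_divide_distrib)
  ultimately show ?thesis by (simp add: sum_distrib_right divide_right_mono)
qed

lemma one_le_mult: "1 \<le> x \<Longrightarrow> 1 \<le> y \<Longrightarrow> 1 \<le> (x :: real) * y"
  using mult_mono[of 1 x 1 y] by simp

lemma ln_net_size_le:
  fixes m R D :: real
  assumes n: "n \<ge> 1" and p: "p \<ge> 1" and R: "R \<ge> 1" and D: "D \<ge> 1"
    and m: "1 \<le> m" "m \<le> 2 * (R * real p * real n * D) + 1"
  shows "ln (2 * real p * m) \<le> 3 * (ln (real n powr (1/3) * real p) + ln (3 * exp 1 * R * D))"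
proof -
  define N where "N = real n powr (1/3)"
  have N: "N > 0" "N ^ 3 = real n" unfolding N_def using n
    by (auto simp: powr_realpow[symmetric] powr_powr)
  have RpnD: "1 \<le> R * real p * real n * D"
    using R p n D by (intro one_le_mult) auto
  have cube: "x \<le> x ^ 3" if "x \<ge> 1" for x :: real
    using self_le_power[OF that] by simp
  have "2 * real p * m \<le> 2 * real p * (3 * (R * real p * real n * D))"
    using m RpnD by (intro mult_left_mono) auto
  also have "\<dots> = 6 * (real p * real p) * real n * R * D" by (simp add: algebra_simps)
  also have "\<dots> \<le> (3 * exp 1) ^ 3 * real p ^ 3 * real n * R ^ 3 * D ^ 3"
  proof -
    have "real p * real p \<le> real p ^ 3" using cube[of "real p"] p
      by (simp add: power3_eq_cube mult_right_mono)
    moreover have "(6::real) \<le> (3 * exp 1) ^ 3"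
    proof -
      have "(6::real) \<le> 3 * exp 1" using exp_ge_add_one_self[of 1] by simp
      then have "(6::real) ^ 3 \<le> (3 * exp 1) ^ 3" by (intro power_mono) auto
      then show ?thesis by simp
    qed
    ultimately show ?thesis using cube[OF R] cube[OF D] R D n
      by (intro mult_mono mult_nonneg_nonneg zero_le_power) auto
  qed
  also have "\<dots> = (N * real p) ^ 3 * (3 * exp 1 * R * D) ^ 3"
    using N by (simp add: power_mult_distrib)
  finally have "ln (2 * real p * m) \<le> ln ((N * real p) ^ 3 * (3 * exp 1 * R * D) ^ 3)"
    using p m by (intro ln_mono) auto
  also have "\<dots> = 3 * (ln (N * real p) + ln (3 * exp 1 * R * D))"
    using N p R D by (simp add: ln_mult ln_realpow)
  finally show ?thesis unfolding N_def .
qed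

text \<open>The uniform deviation of the empirical loss at sparsity level \<open>k\<close>, with \<open>N\<close> standing
  for \<open>n powr (1/3)\<close>: the sub-exponential tail width at confidence level \<open>2 N + k * 3 Lg / c\<close>
  plus the error \<open>2 / n\<close> of approximating by a point of the net.\<close>

definition dev_bound :: "real \<Rightarrow> real \<Rightarrow> real \<Rightarrow> real \<Rightarrow> real \<Rightarrow> real" where
  "dev_bound \<sigma> c Lg N k = \<sigma> * (sqrt ((2 * N + k * (3 * Lg / c)) / N ^ 3)
     + (2 * N + k * (3 * Lg / c)) / N ^ 3) + 2 / N ^ 3"

lemma dev_bound_le_split:
  assumes c: "c > 0" and \<sigma>: "\<sigma> \<ge> 1" and N: "N \<ge> 1" and Lg: "Lg \<ge> 0" and k: "k \<ge> 0"
  shows "dev_bound \<sigma> c Lg N k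
    \<le> 6 * \<sigma> / N + \<sigma> * sqrt (k * (3 * Lg / c) / N ^ 3) + \<sigma> * (k * (3 * Lg / c) / N ^ 3)"
proof -
  define u where "u = k * (3 * Lg / c)"
  have u: "u \<ge> 0" unfolding u_def using c Lg k by simp
  have N3: "2 * N / N ^ 3 = 2 / N ^ 2" using N by (simp add: power2_eq_square power3_eq_cube)
  have "sqrt ((2 * N + u) / N ^ 3) \<le> sqrt (2 * N / N ^ 3) + sqrt (u / N ^ 3)"
    unfolding add_divide_distrib using u N by (intro sqrt_add_le_add_sqrt) auto
  moreover have "sqrt (2 * N / N ^ 3) \<le> 2 / N"
  proof -
    have "2 / N ^ 2 \<le> (2 / N) ^ 2" using N by (simp add: power2_eq_square divide_simps)
    then have "sqrt (2 / N ^ 2) \<le> sqrt ((2 / N) ^ 2)" by (rule real_sqrt_le_mono)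
    then show ?thesis unfolding N3 using N by simp
  qed
  moreover have "2 * N / N ^ 3 \<le> 2 / N"
    using N by (auto simp: N3 power2_eq_square divide_simps)
  moreover have "2 / N ^ 3 \<le> 2 * \<sigma> / N"
  proof -
    have "2 / N ^ 3 \<le> 2 / N"
      using N self_le_power[OF N, of 3] by (intro divide_left_mono) auto
    also have "\<dots> \<le> 2 * \<sigma> / N" using N \<sigma> by (intro divide_right_mono) auto
    finally show ?thesis .
  qed
  ultimately have "sqrt ((2 * N + u) / N ^ 3) + (2 * N + u) / N ^ 3 \<le> 4 / N + sqrt (u / N ^ 3) + u / N ^ 3"
    and "2 / N ^ 3 \<le> 2 * \<sigma> / N"
    by (simp_all add: add_divide_distrib)
  then have "dev_bound \<sigma> c Lg N k \<le> \<sigma> * (4 / N + sqrt (u / N ^ 3) + u / N ^ 3) + 2 * \<sigma> / N"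
    unfolding dev_bound_def u_def using \<sigma> by (smt (verit) mult_left_mono)
  then show ?thesis unfolding u_def by (simp add: algebra_simps)
qed

lemma sqrt_mult_le_amgm:
  fixes x y :: real
  assumes "x \<ge> 0" "y \<ge> 0"
  shows "sqrt (x * y) \<le> x / 8 + 2 * y"
proof -
  have "(x / 8 + 2 * y)\<^sup>2 - x * y = (x / 8 - 2 * y)\<^sup>2" by (simp add: power2_eq_square algebra_simps)
  then have "x * y \<le> (x / 8 + 2 * y)\<^sup>2" by (smt (verit) zero_le_power2)
  then have "sqrt (x * y) \<le> sqrt ((x / 8 + 2 * y)\<^sup>2)" by (rule real_sqrt_le_mono)
  then show ?thesis using assms by simp
qed

text \<open>The part of the deviation bound that grows with the sparsity \<open>k\<close> of the estimator is
  absorbed by seven eighths of its own penalty \<open>k * a * lam\<^sup>2 / 2\<close>.\<close>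

lemma dev_bound_le_penalty:
  assumes c: "c > 0" and \<sigma>: "\<sigma> \<ge> 1" and N: "N \<ge> 1" and Lg: "Lg \<ge> 0" and k: "k \<ge> 0"
  shows "dev_bound \<sigma> c Lg N k \<le> 15 / 2 * (\<sigma> / N) + 7 / 8 * (k * (4 * \<sigma> * Lg / (c * N ^ 2)))"
proof -
  define \<nu> where "\<nu> = 4 * \<sigma> * Lg / (c * N ^ 2)"
  have k\<nu>: "k * \<nu> \<ge> 0" unfolding \<nu>_def using k \<sigma> Lg c by simp
  have "\<sigma>\<^sup>2 * (k * (3 * Lg / c) / N ^ 3) = (k * \<nu>) * (3 * \<sigma> / (4 * N))"
    unfolding \<nu>_def using N c by (simp add: field_simps power2_eq_square power3_eq_cube)
  then have "\<sigma> * sqrt (k * (3 * Lg / c) / N ^ 3) = sqrt ((k * \<nu>) * (3 * \<sigma> / (4 * N)))"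
    using \<sigma> by (metis abs_of_nonneg order_trans real_sqrt_abs real_sqrt_mult zero_le_one)
  also have "\<dots> \<le> (k * \<nu>) / 8 + 3 * \<sigma> / (2 * N)"
    using sqrt_mult_le_amgm[OF k\<nu>, of "3 * \<sigma> / (4 * N)"] \<sigma> N by simp
  finally have "\<sigma> * sqrt (k * (3 * Lg / c) / N ^ 3) \<le> (k * \<nu>) / 8 + 3 * \<sigma> / (2 * N)" .
  moreover have "\<sigma> * (k * (3 * Lg / c) / N ^ 3) \<le> 3 / 4 * (k * \<nu>)"
  proof -
    have "\<sigma> * (k * (3 * Lg / c) / N ^ 3) = 3 / 4 * (k * \<nu>) / N"
      unfolding \<nu>_def using N c by (simp add: field_simps power2_eq_square power3_eq_cube)
    also have "\<dots> \<le> 3 / 4 * (k * \<nu>) / 1" by (rule divide_left_mono) (use N k\<nu> in auto)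
    finally show ?thesis by simp
  qed
  moreover have "6 * \<sigma> / N = 6 * (\<sigma> / N)" "3 * \<sigma> / (2 * N) = 3 / 2 * (\<sigma> / N)" by simp_all
  ultimately have "dev_bound \<sigma> c Lg N k \<le> 15 / 2 * (\<sigma> / N) + 7 / 8 * (k * \<nu>)"
    using dev_bound_le_split[OF assms] by linarith
  then show ?thesis unfolding \<nu>_def .
qed

lemma dev_bound_le_sparsity:
  assumes c: "c > 0" "c \<le> 1 / 2" and \<sigma>: "\<sigma> \<ge> 1" and N: "N \<ge> 1" and Lg: "Lg \<ge> 0"
    and s: "s \<ge> 0"
  shows "dev_bound \<sigma> c Lg N s
    \<le> 6 * (\<sigma> / N) + 3 / c * (\<sigma> * sqrt (s * Lg / N ^ 3)) + 3 / c * (\<sigma> * (s * Lg / N ^ 2))"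
proof -
  have c3: "3 / c \<ge> 1" using c by (simp add: field_simps)
  have "sqrt (s * (3 * Lg / c) / N ^ 3) = sqrt (3 / c) * sqrt (s * Lg / N ^ 3)"
    by (simp add: real_sqrt_mult[symmetric] field_simps)
  also have "\<dots> \<le> 3 / c * sqrt (s * Lg / N ^ 3)"
  proof (rule mult_right_mono)
    have "3 / c * 1 \<le> 3 / c * (3 / c)" using c3 c by (intro mult_left_mono) auto
    then have "sqrt (3 / c) \<le> sqrt ((3 / c) * (3 / c))" by (intro real_sqrt_le_mono) simp
    also have "\<dots> = 3 / c" using c by (simp only: real_sqrt_abs2) simp
    finally show "sqrt (3 / c) \<le> 3 / c" .
    show "0 \<le> sqrt (s * Lg / N ^ 3)" using s Lg N by simp
  qed
  finally have "\<sigma> * sqrt (s * (3 * Lg / c) / N ^ 3) \<le> \<sigma> * (3 / c * sqrt (s * Lg / N ^ 3))"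
    using \<sigma> by (intro mult_left_mono) auto
  then have "\<sigma> * sqrt (s * (3 * Lg / c) / N ^ 3) \<le> 3 / c * (\<sigma> * sqrt (s * Lg / N ^ 3))"
    by (simp add: algebra_simps)
  moreover have "\<sigma> * (s * (3 * Lg / c) / N ^ 3) \<le> 3 / c * (\<sigma> * (s * Lg / N ^ 2))"
  proof -
    have "s * Lg / N ^ 3 \<le> s * Lg / N ^ 2"
      using N s Lg by (intro divide_left_mono) (auto simp: power2_eq_square power3_eq_cube)
    then have "\<sigma> * (s * Lg / N ^ 3) \<le> \<sigma> * (s * Lg / N ^ 2)" using \<sigma> by (intro mult_left_mono) auto
    then have "3 / c * (\<sigma> * (s * Lg / N ^ 3)) \<le> 3 / c * (\<sigma> * (s * Lg / N ^ 2))"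
      by (rule mult_left_mono) (use c in auto)
    moreover have "\<sigma> * (s * (3 * Lg / c) / N ^ 3) = 3 / c * (\<sigma> * (s * Lg / N ^ 3))"
      using c N by (simp add: field_simps)
    ultimately show ?thesis by (simp only:)
  qed
  moreover have "6 * \<sigma> / N = 6 * (\<sigma> / N)" by simp
  ultimately show ?thesis using dev_bound_le_split[OF c(1) \<sigma> N Lg s] by linarith
qed

lemma dev_bound_sum_le:
  assumes c: "c > 0" "c \<le> 1 / 2" and \<sigma>: "\<sigma> \<ge> 1" and N: "N \<ge> 1" and Lg: "Lg \<ge> 0"
    and k: "k \<ge> 0" and s: "s \<ge> 0"
  shows "dev_bound \<sigma> c Lg N k - k * (4 * \<sigma> * Lg / (c * N ^ 2)) + dev_bound \<sigma> c Lg N s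
    \<le> 27 / 2 * (\<sigma> / N) + 3 / c * (\<sigma> * sqrt (s * Lg / N ^ 3)) + 3 / c * (\<sigma> * (s * Lg / N ^ 2))"
proof -
  have "k * (4 * \<sigma> * Lg / (c * N ^ 2)) \<ge> 0" using k \<sigma> Lg c by simp
  then show ?thesis
    using dev_bound_le_penalty[OF c(1) \<sigma> N Lg k] dev_bound_le_sparsity[OF c \<sigma> N Lg s] by linarith
qed

lemma sqrt_penalty_level_le:
  fixes c \<sigma> N Lg a :: real
  assumes c: "c > 0" "c \<le> 1 / 2" and \<sigma>: "\<sigma> \<ge> 1" and N: "N \<ge> 1" and Lg: "Lg \<ge> 0" and a: "a > 0"
  shows "sqrt (8 * \<sigma> / (c * a * N ^ 2) * Lg) \<le> 8 / c * (a powr (- 1 / 2) * \<sigma> * sqrt Lg / N)"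
proof -
  define x where "x = 8 * \<sigma> / c"
  have x: "x \<ge> 1" unfolding x_def using c \<sigma> by (simp add: field_simps)
  have "sqrt (8 * \<sigma> / (c * a * N ^ 2) * Lg) = sqrt x * (sqrt Lg / (sqrt a * N))"
    unfolding x_def using a N by (simp add: real_sqrt_mult real_sqrt_divide power2_eq_square)
  also have "\<dots> \<le> x * (sqrt Lg / (sqrt a * N))"
  proof (rule mult_right_mono)
    have "sqrt x \<le> sqrt (x ^ 2)" using x self_le_power[OF x, of 2] by (intro real_sqrt_le_mono) auto
    then show "sqrt x \<le> x" using x by simp
  qed (use a N Lg in simp)
  also have "\<dots> = 8 / c * (a powr (- 1 / 2) * \<sigma> * sqrt Lg / N)"
    unfolding x_def using a by (simp add: powr_minus_divide powr_half_sqrt)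
  finally show ?thesis .
qed

lemma excess_bound_penalized:
  fixes c \<sigma> N Lg k s \<Gamma> \<epsilon> \<Delta> :: real
  assumes c: "c > 0" "c \<le> 1 / 2" and \<sigma>: "\<sigma> \<ge> 1" and N: "N \<ge> 1" and Lg: "Lg \<ge> 0"
    and k: "k \<ge> 0" and s: "s \<ge> 0" and \<Gamma>: "\<Gamma> \<ge> 0" and \<epsilon>: "\<epsilon> \<ge> 0"
    and basic: "\<Delta> \<le> dev_bound \<sigma> c Lg N k + (s - k) * (4 * \<sigma> * Lg / (c * N ^ 2)) + \<Gamma>
      + dev_bound \<sigma> c Lg N s + \<epsilon>"
  shows "\<Delta> \<le> 20 / c * \<sigma> * (s * Lg / N ^ 2 + sqrt (s * Lg / N ^ 3) + 1 / N)
    + 20 / c * sqrt (\<sigma> * (\<Gamma> + \<epsilon>) / N) + \<Gamma> + \<epsilon>"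
proof -
  define ic where "ic = 1 / c"
  define a1 where "a1 = \<sigma> * (s * Lg / N ^ 2)"
  define a2 where "a2 = \<sigma> * sqrt (s * Lg / N ^ 3)"
  define a3 where "a3 = \<sigma> / N"
  define r where "r = sqrt (\<sigma> * (\<Gamma> + \<epsilon>) / N)"
  have ic: "ic \<ge> 2" unfolding ic_def using c by (simp add: field_simps)
  have nonneg: "a1 \<ge> 0" "a2 \<ge> 0" "a3 \<ge> 0" "r \<ge> 0"
    unfolding a1_def a2_def a3_def r_def using s \<sigma> Lg N \<Gamma> \<epsilon> by simp_all
  have "(s - k) * (4 * \<sigma> * Lg / (c * N ^ 2)) = 4 * (ic * a1) - k * (4 * \<sigma> * Lg / (c * N ^ 2))"
    unfolding a1_def ic_def using c N by (simp add: field_simps)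
  moreover have "3 / c * a2 = 3 * (ic * a2)" "3 / c * a1 = 3 * (ic * a1)" unfolding ic_def by simp_all
  moreover have "27 / 2 * a3 \<le> 20 * (ic * a3)"
    using mult_right_mono[OF ic nonneg(3)] nonneg(3) by linarith
  moreover have "ic * a1 \<ge> 0" "ic * a2 \<ge> 0" "ic * r \<ge> 0" using ic nonneg by simp_all
  ultimately have "\<Delta> \<le> 20 * (ic * a1) + 20 * (ic * a2) + 20 * (ic * a3) + 20 * (ic * r) + \<Gamma> + \<epsilon>"
    using basic dev_bound_sum_le[OF c \<sigma> N Lg k s] unfolding a1_def[symmetric] a2_def[symmetric]
      a3_def[symmetric] by linarith
  then show ?thesis unfolding a1_def a2_def a3_def ic_def r_def by (simp add: algebra_simps)
qed

lemma excess_bound_lasso: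
  fixes c \<sigma> N Lg k s \<epsilon> \<Delta> a R :: real
  assumes c: "c > 0" "c \<le> 1 / 2" and \<sigma>: "\<sigma> \<ge> 1" and N: "N \<ge> 1" and Lg: "Lg \<ge> 1"
    and k: "k \<ge> 0" and s: "s \<ge> 1" and \<epsilon>: "\<epsilon> \<ge> 0" and a: "0 < a" "a \<le> 1" and R: "R \<ge> 1"
    and basic: "\<Delta> \<le> dev_bound \<sigma> c Lg N k + sqrt (8 * \<sigma> / (c * a * N ^ 2) * Lg) * (s * R)
      - k * (4 * \<sigma> * Lg / (c * N ^ 2)) + dev_bound \<sigma> c Lg N s + \<epsilon>"
  shows "\<Delta> \<le> 20 / c * a powr (- 1 / 2) * s * \<sigma> * (Lg / N ^ 2 + R * sqrt Lg / N)
    + 20 / c * sqrt (\<sigma> * \<epsilon> / N) + \<epsilon>"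
proof -
  define ic where "ic = 1 / c"
  define A where "A = a powr (- 1 / 2)"
  define T where "T = A * s * \<sigma> * R * sqrt Lg / N"
  define Tl where "Tl = A * s * \<sigma> * Lg / N ^ 2"
  define r where "r = sqrt (\<sigma> * \<epsilon> / N)"
  have ic: "ic \<ge> 2" unfolding ic_def using c by (simp add: field_simps)
  have A: "A \<ge> 1" unfolding A_def using a by (simp add: powr_minus_divide powr_half_sqrt)
  have nonneg: "T \<ge> 0" "Tl \<ge> 0" "r \<ge> 0"
    unfolding T_def Tl_def r_def using A s \<sigma> R Lg N \<epsilon> by simp_all
  have "\<sigma> * 1 / N \<le> \<sigma> * (A * s * R * sqrt Lg) / N"
    using one_le_mult[OF one_le_mult[OF one_le_mult[OF A s] R]] Lg \<sigma> N
    by (intro divide_right_mono mult_left_mono) auto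
  then have a3: "\<sigma> / N \<le> T" unfolding T_def by (simp add: algebra_simps)
  have "\<sigma> * (s * Lg / N ^ 2) \<le> Tl"
    unfolding Tl_def using mult_right_mono[OF A, of "\<sigma> * (s * Lg / N ^ 2)"] s \<sigma> Lg
    by (simp add: algebra_simps)
  then have "3 / c * (\<sigma> * (s * Lg / N ^ 2)) \<le> 3 / c * Tl" by (rule mult_left_mono) (use c in auto)
  then have a1: "3 / c * (\<sigma> * (s * Lg / N ^ 2)) \<le> 3 * (ic * Tl)" unfolding ic_def by simp
  have "\<sigma> * sqrt (s * Lg / N ^ 3) \<le> T"
  proof -
    have "s * Lg / N ^ 3 \<le> (s * sqrt Lg / N) ^ 2"
    proof -
      have "s * Lg / N ^ 3 \<le> s * Lg / N ^ 2"
        using N s Lg self_le_power[OF N, of 2] by (intro divide_left_mono)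
          (auto simp: power2_eq_square power3_eq_cube)
      also have "\<dots> \<le> (s * s) * Lg / N ^ 2"
        using s Lg N by (intro divide_right_mono mult_right_mono) auto
      also have "\<dots> = (s * sqrt Lg / N) ^ 2" using Lg by (simp add: power_divide power_mult_distrib power2_eq_square)
      finally show ?thesis .
    qed
    then have "sqrt (s * Lg / N ^ 3) \<le> s * sqrt Lg / N"
      using s Lg N real_sqrt_le_mono by fastforce
    also have "\<dots> \<le> A * R * (s * sqrt Lg / N)"
      using mult_right_mono[OF one_le_mult[OF A R], of "s * sqrt Lg / N"] s Lg N by simp
    finally show ?thesis
      unfolding T_def using \<sigma> mult_left_mono[of _ _ \<sigma>] by (fastforce simp: algebra_simps)
  qed
  then have "3 / c * (\<sigma> * sqrt (s * Lg / N ^ 3)) \<le> 3 / c * T" by (rule mult_left_mono) (use c in auto)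
  then have a2: "3 / c * (\<sigma> * sqrt (s * Lg / N ^ 3)) \<le> 3 * (ic * T)" unfolding ic_def by simp
  have "sqrt (8 * \<sigma> / (c * a * N ^ 2) * Lg) \<le> 8 / c * (A * \<sigma> * sqrt Lg / N)"
    using sqrt_penalty_level_le[OF c \<sigma> N _ a(1)] Lg unfolding A_def by simp
  then have "sqrt (8 * \<sigma> / (c * a * N ^ 2) * Lg) * (s * R) \<le> 8 / c * (A * \<sigma> * sqrt Lg / N) * (s * R)"
    by (rule mult_right_mono) (use s R in auto)
  then have lam: "sqrt (8 * \<sigma> / (c * a * N ^ 2) * Lg) * (s * R) \<le> 8 * (ic * T)"
    unfolding T_def ic_def by (simp add: algebra_simps)
  have "27 / 2 * (\<sigma> / N) \<le> 7 * (ic * T)" "ic * T \<ge> 0" "ic * Tl \<ge> 0" "ic * r \<ge> 0"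
    using a3 mult_right_mono[OF ic nonneg(1)] ic nonneg by simp_all
  then have "\<Delta> \<le> 20 * (ic * Tl) + 20 * (ic * T) + 20 * (ic * r) + \<epsilon>"
    using basic dev_bound_sum_le[OF c \<sigma> N _ k, of Lg s] Lg s a1 a2 lam by linarith
  then show ?thesis unfolding Tl_def T_def ic_def r_def A_def using c N by (simp add: field_simps)
qed

text \<open>Independence, identical distribution,
  the \<open>psi1\<close>-norm bounds and the smoothness of the loss enter only through the stated tail bounds
  and the second-order condition S3ONC.\<close>

locale sparse_erm_setting =
  fixes M :: "'m measure" and Z :: "nat \<Rightarrow> 'm \<Rightarrow> 'w :: topological_space"
    and L :: "(nat \<Rightarrow> real) \<Rightarrow> 'w \<Rightarrow> real" and Cf :: "'w \<Rightarrow> real"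
    and n p :: nat and c R \<sigma> \<sigma>L C\<mu> :: real
  assumes prob: "prob_space M" and p: "p > 2" and n: "n \<ge> 1" and c: "0 < c" "c \<le> 1 / 2"
    and R: "R \<ge> 1" and \<sigma>: "\<sigma> \<ge> 1" and \<sigma>L: "\<sigma>L \<ge> 1" and C\<mu>: "C\<mu> \<ge> 1"
    and Z_measurable: "\<forall>i<n. Z i \<in> measurable M borel"
    and L_measurable: "(\<lambda>(b, z). L b z) \<in> borel_measurable (borel \<Otimes>\<^sub>M borel)"
    and L_integrable: "\<forall>i<n. \<forall>b\<in>vecs p. integrable M (\<lambda>\<omega>. L b (Z i \<omega>))"
    and L_tail: "\<forall>b\<in>vecs p. \<forall>t\<ge>0. \<forall>v :: nat \<Rightarrow> real.
      measure M {\<omega>\<in>space M. \<bar>\<Sum>i<n. v i * (L b (Z i \<omega>) - (\<integral>\<omega>'. L b (Z i \<omega>') \<partial>M))\<bar>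
        > \<sigma> * (sqrt (\<Sum>i<n. (v i)\<^sup>2) * sqrt t + Max ((\<lambda>i. \<bar>v i\<bar>) ` {..<n}) * t)}
      \<le> 2 * exp (- c * t)"
    and Cf_measurable: "Cf \<in> borel_measurable borel"
    and Cf_integrable: "\<forall>i<n. integrable M (\<lambda>\<omega>. Cf (Z i \<omega>))"
    and Cf_mean: "\<forall>i<n. (\<integral>\<omega>. \<bar>Cf (Z i \<omega>)\<bar> \<partial>M) \<le> C\<mu>"
    and Cf_tail: "\<forall>t\<ge>0. \<forall>v :: nat \<Rightarrow> real.
      measure M {\<omega>\<in>space M. \<bar>\<Sum>i<n. v i * (Cf (Z i \<omega>) - (\<integral>\<omega>'. Cf (Z i \<omega>') \<partial>M))\<bar>
        > \<sigma>L * (sqrt (\<Sum>i<n. (v i)\<^sup>2) * sqrt t + Max ((\<lambda>i. \<bar>v i\<bar>) ` {..<n}) * t)}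
      \<le> 2 * exp (- c * t)"
    and L_lipschitz: "\<forall>i<n. AE \<omega> in M. \<forall>b1\<in>vecs p. \<forall>b2\<in>vecs p.
      \<bar>L b1 (Z i \<omega>) - L b2 (Z i \<omega>)\<bar> \<le> Cf (Z i \<omega>) * l2norm p (\<lambda>k. b1 k - b2 k)"
begin

abbreviation n_cbrt :: real where "n_cbrt \<equiv> real n powr (1 / 3)"

abbreviation Lg :: real where "Lg \<equiv> ln (n_cbrt * real p) + ln (3 * exp 1 * R * (\<sigma>L + C\<mu>))"

abbreviation lam :: "real \<Rightarrow> real" where
  "lam a \<equiv> sqrt (8 * \<sigma> / (c * a * real n powr (2 / 3)) * Lg)"

lemma n_cbrt: "n_cbrt \<ge> 1" "n_cbrt ^ 2 = real n powr (2 / 3)" "n_cbrt ^ 3 = real n"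
  using n by (auto simp: ge_one_powr_ge_zero powr_realpow[symmetric] powr_powr)

lemma Lg_ge_1: "Lg \<ge> 1"
proof -
  have "3 \<le> n_cbrt * real p"
    using mult_mono[of 1 n_cbrt 3 "real p"] n_cbrt(1) p by simp
  then have "ln (exp 1) \<le> ln (n_cbrt * real p)"
    using exp_le by (subst ln_le_cancel_iff) auto
  then have "1 \<le> ln (n_cbrt * real p)" by simp
  moreover have "1 \<le> 3 * exp 1 * R * (\<sigma>L + C\<mu>)"
    using exp_ge_add_one_self[of 1] R \<sigma>L C\<mu> by (intro one_le_mult) auto
  then have "0 \<le> ln (3 * exp 1 * R * (\<sigma>L + C\<mu>))" by simp
  ultimately show ?thesis by linarith
qed

lemma penalty_level:
  assumes "a > 0"
  shows "a * (lam a)\<^sup>2 / 2 = 4 * \<sigma> * Lg / (c * n_cbrt ^ 2)"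
proof -
  have "0 \<le> 8 * \<sigma> / (c * a * real n powr (2 / 3)) * Lg" using assms c \<sigma> Lg_ge_1 by simp
  then have "(lam a)\<^sup>2 = 8 * \<sigma> / (c * a * real n powr (2 / 3)) * Lg" by simp
  moreover have "real n powr (2 / 3) > 0" using n by simp
  ultimately show ?thesis unfolding n_cbrt(2) using assms c by (simp add: field_simps)
qed

text \<open>The mesh is chosen so that passing to the nearest net point changes the empirical and the
  population loss by at most \<open>2 / n\<close> in total.\<close>

definition mesh :: real where "mesh = 1 / (real p * real n * (\<sigma>L + C\<mu>))"

definition net_values :: "real set" where "net_values = grid_values mesh R"

text \<open>The confidence level at which the deviation is controlled at a net point \<open>g\<close>: the extra
  \<open>l0norm p g * ln (2 * p * card net_values)\<close> pays, in the union bound, for the number of net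
  points with as many nonzero coordinates as \<open>g\<close>.\<close>

definition net_level :: "(nat \<Rightarrow> real) \<Rightarrow> real" where
  "net_level g = 2 * n_cbrt + real (l0norm p g) * ln (2 * real p * real (card net_values)) / c"

definition net_failure :: "(nat \<Rightarrow> real) \<Rightarrow> 'm set" where
  "net_failure g = {\<omega>\<in>space M.
     \<sigma> * (sqrt (net_level g / real n) + net_level g / real n) < avg_dev n M (\<lambda>i \<omega>. L g (Z i \<omega>)) \<omega>}"

lemma mesh_pos: "mesh > 0"
  unfolding mesh_def using p n \<sigma>L C\<mu> by simp

lemma net_values: "finite net_values" "0 \<in> net_values" "card net_values \<ge> 1"
  "real (card net_values) \<le> 2 * (R * real p * real n * (\<sigma>L + C\<mu>)) + 1"
proof -
  show fin: "finite net_values" and zero: "0 \<in> net_values"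
    unfolding net_values_def using mesh_pos R by (auto intro: finite_grid_values zero_in_grid_values)
  then show "card net_values \<ge> 1" by (auto simp: Suc_le_eq card_gt_0_iff)
  show "real (card net_values) \<le> 2 * (R * real p * real n * (\<sigma>L + C\<mu>)) + 1"
    using card_grid_values_le[OF mesh_pos, of R] R unfolding net_values_def mesh_def by simp
qed

lemma ln_card_net_le: "ln (2 * real p * real (card net_values)) \<le> 3 * Lg"
  using ln_net_size_le[OF n _ R _ _ net_values(4)] p \<sigma>L C\<mu> net_values(3) by simp

lemma net_level_le: "net_level g \<le> 2 * n_cbrt + real (l0norm p g) * (3 * Lg / c)"
  unfolding net_level_def using ln_card_net_le c by (simp add: mult_left_mono divide_right_mono)

lemma loss_measurable: "i < n \<Longrightarrow> (\<lambda>\<omega>. L b (Z i \<omega>)) \<in> borel_measurable M"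
  using Z_measurable L_measurable measurable_loss_comp by blast

lemma measure_net_deviation_le:
  "measure M (\<Union>g\<in>grid p net_values. net_failure g)
    \<le> 4 * exp (- 2 * c * n_cbrt)"
proof -
  define m where "m = real (card net_values)"
  define \<Lambda> where "\<Lambda> = ln (2 * real p * m)"
  have m: "m \<ge> 1" unfolding m_def using net_values(3) by simp
  have exp_\<Lambda>: "exp (- \<Lambda>) = 1 / (2 * real p * m)"
    unfolding \<Lambda>_def using m p by (simp add: exp_minus inverse_eq_divide)
  have "measure M (\<Union>g\<in>grid p net_values. net_failure g)
    \<le> 2 * (2 * exp (- 2 * c * n_cbrt))"
  proof (rule measure_UN_grid_le[OF prob net_values(1,2)])
    fix g assume g: "g \<in> grid p net_values"
    show "net_failure g \<in> sets M"
      unfolding net_failure_def using loss_measurable by (intro sets_avg_dev_gt) blast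
    have "0 \<le> \<Lambda>" unfolding \<Lambda>_def using one_le_mult[of "2 * real p" m] m p by simp
    then have "net_level g \<ge> 0"
      unfolding net_level_def \<Lambda>_def m_def using n_cbrt(1) c by simp
    then have "measure M (net_failure g) \<le> 2 * exp (- c * net_level g)"
      unfolding net_failure_def using measure_avg_dev_gt_le[OF bspec[OF L_tail] n] g grid_subset_vecs
      by blast
    also have "exp (- c * net_level g) = exp (- 2 * c * n_cbrt) * exp (- \<Lambda>) ^ l0norm p g"
    proof -
      have "- c * net_level g = - 2 * c * n_cbrt + real (l0norm p g) * (- \<Lambda>)"
        unfolding net_level_def \<Lambda>_def m_def using c by (simp add: field_simps)
      then show ?thesis by (simp only: exp_add exp_of_nat_mult)
    qed
    finally show "measure M (net_failure g)
        \<le> 2 * exp (- 2 * c * n_cbrt) * (1 / (2 * real p * m)) ^ l0norm p g"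
      unfolding exp_\<Lambda> by simp
  next
    have "1 / (2 * real p * m) * (m - 1) * real p = (m - 1) / (2 * m)"
      using p m by (simp add: field_simps)
    also have "\<dots> \<le> 1 / 2" using m by (simp add: field_simps)
    finally show "1 / (2 * real p * m) * (real (card net_values) - 1) * real p \<le> 1 / 2"
      unfolding m_def .
  qed (use m in auto)
  then show ?thesis by simp
qed

lemma Cf_average_le:
  assumes "avg_dev n M (\<lambda>i \<omega>. Cf (Z i \<omega>)) \<omega> \<le> 2 * \<sigma>L"
  shows "(\<Sum>i<n. Cf (Z i \<omega>)) / real n \<le> C\<mu> + 2 * \<sigma>L"
proof -
  have "(\<integral>\<omega>. Cf (Z i \<omega>) \<partial>M) \<le> C\<mu>" if i: "i < n" for i
  proof -
    have "(\<integral>\<omega>. Cf (Z i \<omega>) \<partial>M) \<le> (\<integral>\<omega>. \<bar>Cf (Z i \<omega>)\<bar> \<partial>M)"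
      using i Cf_integrable by (intro integral_mono) auto
    then show ?thesis using i Cf_mean by (meson order_trans)
  qed
  then have "(\<Sum>i<n. (\<integral>\<omega>. Cf (Z i \<omega>) \<partial>M)) / real n \<le> C\<mu>"
    using n sum_mono[of "{..<n}" "\<lambda>i. \<integral>\<omega>. Cf (Z i \<omega>) \<partial>M" "\<lambda>_. C\<mu>"]
    by (simp add: divide_le_eq mult.commute)
  moreover have "(\<Sum>i<n. Cf (Z i \<omega>)) / real n - (\<Sum>i<n. (\<integral>\<omega>. Cf (Z i \<omega>) \<partial>M)) / real n \<le> 2 * \<sigma>L"
    using assms unfolding avg_dev_def by (simp add: sum_subtractf diff_divide_distrib flip: sum_divide_distrib)
  ultimately show ?thesis by linarith
qed

lemma net_event:
  "\<exists>A\<in>sets M. 1 - 2 * exp (- c * real n) - 4 * exp (- 2 * c * n_cbrt) \<le> measure M A \<and>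
    (\<forall>\<omega>\<in>A. (\<Sum>i<n. Cf (Z i \<omega>)) / real n \<le> C\<mu> + 2 * \<sigma>L \<and>
      (\<forall>i<n. \<forall>b1\<in>vecs p. \<forall>b2\<in>vecs p.
         \<bar>L b1 (Z i \<omega>) - L b2 (Z i \<omega>)\<bar> \<le> Cf (Z i \<omega>) * l2norm p (\<lambda>k. b1 k - b2 k)) \<and>
      (\<forall>g\<in>grid p net_values. avg_dev n M (\<lambda>i \<omega>. L g (Z i \<omega>)) \<omega>
         \<le> \<sigma> * (sqrt (net_level g / real n) + net_level g / real n)))"
proof -
  interpret prob_space M by (rule prob)
  define bad_net where "bad_net = (\<Union>g\<in>grid p net_values. net_failure g)"
  define bad_Cf where "bad_Cf = {\<omega>\<in>space M.
      \<sigma>L * (sqrt (real n / real n) + real n / real n) < avg_dev n M (\<lambda>i \<omega>. Cf (Z i \<omega>)) \<omega>}"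
  have Cf_meas: "\<forall>i<n. (\<lambda>\<omega>. Cf (Z i \<omega>)) \<in> borel_measurable M"
    using Z_measurable Cf_measurable by (auto intro: measurable_compose)
  have sets: "bad_Cf \<in> sets M" "bad_net \<in> sets M"
    unfolding bad_Cf_def bad_net_def net_failure_def using sets_avg_dev_gt[OF Cf_meas] loss_measurable
    by (auto intro!: sets.finite_UN finite_grid net_values sets_avg_dev_gt)
  have "measure M bad_Cf \<le> 2 * exp (- c * real n)"
    unfolding bad_Cf_def by (rule measure_avg_dev_gt_le[OF Cf_tail n]) simp
  moreover have "measure M bad_net \<le> 4 * exp (- 2 * c * n_cbrt)"
    unfolding bad_net_def by (rule measure_net_deviation_le)
  moreover have "measure M (space M - (bad_Cf \<union> bad_net)) = 1 - measure M (bad_Cf \<union> bad_net)"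
    using sets by (intro prob_compl) auto
  ultimately have measure_good: "1 - 2 * exp (- c * real n) - 4 * exp (- 2 * c * n_cbrt)
      \<le> measure M (space M - (bad_Cf \<union> bad_net))"
    using measure_Un_le[OF sets] by linarith
  have "AE \<omega> in M. \<forall>i\<in>{..<n}. \<forall>b1\<in>vecs p. \<forall>b2\<in>vecs p.
      \<bar>L b1 (Z i \<omega>) - L b2 (Z i \<omega>)\<bar> \<le> Cf (Z i \<omega>) * l2norm p (\<lambda>k. b1 k - b2 k)"
    by (rule AE_finite_allI) (use L_lipschitz in auto)
  moreover have "space M - (bad_Cf \<union> bad_net) \<in> sets M" using sets by auto
  ultimately obtain A where A: "A \<in> sets M" "A \<subseteq> space M - (bad_Cf \<union> bad_net)"
    "measure M A = measure M (space M - (bad_Cf \<union> bad_net))"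
    and lipschitz: "\<forall>\<omega>\<in>A. \<forall>i\<in>{..<n}. \<forall>b1\<in>vecs p. \<forall>b2\<in>vecs p.
      \<bar>L b1 (Z i \<omega>) - L b2 (Z i \<omega>)\<bar> \<le> Cf (Z i \<omega>) * l2norm p (\<lambda>k. b1 k - b2 k)"
    using AE_refine_event by blast
  show ?thesis
  proof (intro bexI[OF _ A(1)] conjI ballI)
    fix \<omega> assume "\<omega> \<in> A"
    then have \<omega>: "\<omega> \<in> space M" "\<omega> \<notin> bad_Cf" "\<omega> \<notin> bad_net" using A(2) by auto
    then have "avg_dev n M (\<lambda>i \<omega>. Cf (Z i \<omega>)) \<omega> \<le> 2 * \<sigma>L"
      using n unfolding bad_Cf_def by auto
    then show "(\<Sum>i<n. Cf (Z i \<omega>)) / real n \<le> C\<mu> + 2 * \<sigma>L" by (rule Cf_average_le)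
    show "avg_dev n M (\<lambda>i \<omega>. L g (Z i \<omega>)) \<omega>
        \<le> \<sigma> * (sqrt (net_level g / real n) + net_level g / real n)" if "g \<in> grid p net_values" for g
      using \<omega> that unfolding bad_net_def net_failure_def by (auto simp: not_less)
  qed (use A(3) measure_good lipschitz in auto)
qed

lemma deviation_le_net_point:
  assumes Cf_avg: "(\<Sum>i<n. Cf (Z i \<omega>)) / real n \<le> C\<mu> + 2 * \<sigma>L"
    and lipschitz: "\<forall>i<n. \<forall>b1\<in>vecs p. \<forall>b2\<in>vecs p.
      \<bar>L b1 (Z i \<omega>) - L b2 (Z i \<omega>)\<bar> \<le> Cf (Z i \<omega>) * l2norm p (\<lambda>k. b1 k - b2 k)"
    and b: "b \<in> vecs p" "linfnorm p b \<le> R"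
  defines "g \<equiv> net_point mesh p b"
  shows "\<bar>emp_loss n L Z \<omega> b - pop_loss M n L Z b\<bar>
    \<le> \<bar>emp_loss n L Z \<omega> g - pop_loss M n L Z g\<bar> + 2 / real n"
proof -
  define d where "d = l2norm p (\<lambda>j. b j - g j)"
  have g: "g \<in> vecs p"
    unfolding g_def using net_point_in_grid[OF mesh_pos b(2)] grid_subset_vecs by auto
  have d: "0 \<le> d" "d \<le> 1 / (real n * (\<sigma>L + C\<mu>))"
  proof -
    show "0 \<le> d" unfolding d_def l2norm_def by (simp add: sum_nonneg)
    have "sqrt (real p) \<le> sqrt (real p ^ 2)"
      using self_le_power[of "real p" 2] p by (intro real_sqrt_le_mono) auto
    then have "sqrt (real p) \<le> real p" by simp
    have "d \<le> sqrt (real p) * mesh"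
      using l2norm_diff_net_point_le[OF mesh_pos] unfolding d_def g_def .
    also have "\<dots> \<le> real p * mesh"
      using \<open>sqrt (real p) \<le> real p\<close> mesh_pos by (intro mult_right_mono) auto
    finally show "d \<le> 1 / (real n * (\<sigma>L + C\<mu>))" unfolding mesh_def using p by simp
  qed
  have "\<forall>i<n. \<bar>L b (Z i \<omega>) - L g (Z i \<omega>)\<bar> \<le> Cf (Z i \<omega>) * d"
    using lipschitz b g unfolding d_def by blast
  then have "\<bar>emp_loss n L Z \<omega> b - emp_loss n L Z \<omega> g\<bar> \<le> (\<Sum>i<n. Cf (Z i \<omega>)) / real n * d"
    by (rule emp_loss_lipschitz)
  also have "\<dots> \<le> (C\<mu> + 2 * \<sigma>L) * d" using Cf_avg d(1) by (rule mult_right_mono)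
  finally have "\<bar>emp_loss n L Z \<omega> b - emp_loss n L Z \<omega> g\<bar> \<le> (C\<mu> + 2 * \<sigma>L) * d" .
  moreover have "\<bar>pop_loss M n L Z b - pop_loss M n L Z g\<bar> \<le> C\<mu> * d"
  proof (rule pop_loss_lipschitz[where L = L and Z = Z and b = b and b' = g,
        OF _ _ Cf_integrable Cf_mean _ n d(1)])
    show "\<forall>i<n. AE \<omega> in M. \<bar>L b (Z i \<omega>) - L g (Z i \<omega>)\<bar> \<le> Cf (Z i \<omega>) * d"
      using L_lipschitz b(1) g unfolding d_def by (auto elim: eventually_mono)
  qed (use L_integrable b(1) g in auto)
  moreover have "(C\<mu> + 2 * \<sigma>L) * d + C\<mu> * d \<le> 2 / real n"
  proof -
    have cancel: "2 * D * (1 / (real n * D)) = 2 / real n" if "D > 0" for D :: real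
      using that by simp
    have "(C\<mu> + 2 * \<sigma>L) * d + C\<mu> * d \<le> 2 * (\<sigma>L + C\<mu>) * d" using \<sigma>L d by (simp add: algebra_simps)
    also have "\<dots> \<le> 2 * (\<sigma>L + C\<mu>) * (1 / (real n * (\<sigma>L + C\<mu>)))"
      using d \<sigma>L C\<mu> by (intro mult_left_mono) auto
    also have "\<dots> = 2 / real n" using cancel[of "\<sigma>L + C\<mu>"] \<sigma>L C\<mu> by simp
    finally show ?thesis .
  qed
  ultimately show ?thesis by linarith
qed

lemma uniform_deviation_event:
  "\<exists>A\<in>sets M. 1 - 2 * exp (- c * real n) - 4 * exp (- 2 * c * n_cbrt) \<le> measure M A \<and>
    (\<forall>\<omega>\<in>A. \<forall>b\<in>vecs p. linfnorm p b \<le> R \<longrightarrow>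
      \<bar>emp_loss n L Z \<omega> b - pop_loss M n L Z b\<bar> \<le> dev_bound \<sigma> c Lg n_cbrt (real (l0norm p b)))"
proof -
  obtain A where A: "A \<in> sets M" "1 - 2 * exp (- c * real n) - 4 * exp (- 2 * c * n_cbrt) \<le> measure M A"
    and good: "\<forall>\<omega>\<in>A. (\<Sum>i<n. Cf (Z i \<omega>)) / real n \<le> C\<mu> + 2 * \<sigma>L \<and>
      (\<forall>i<n. \<forall>b1\<in>vecs p. \<forall>b2\<in>vecs p.
         \<bar>L b1 (Z i \<omega>) - L b2 (Z i \<omega>)\<bar> \<le> Cf (Z i \<omega>) * l2norm p (\<lambda>k. b1 k - b2 k)) \<and>
      (\<forall>g\<in>grid p net_values. avg_dev n M (\<lambda>i \<omega>. L g (Z i \<omega>)) \<omega>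
         \<le> \<sigma> * (sqrt (net_level g / real n) + net_level g / real n))"
    using net_event by blast
  show ?thesis
  proof (intro bexI[OF _ A(1)] conjI A(2) ballI impI)
    fix \<omega> b assume \<omega>: "\<omega> \<in> A" and b: "b \<in> vecs p" "linfnorm p b \<le> R"
    define g where "g = net_point mesh p b"
    define T where "T = 2 * n_cbrt + real (l0norm p b) * (3 * Lg / c)"
    have g: "g \<in> grid p net_values" "g \<in> vecs p"
      unfolding g_def net_values_def using net_point_in_grid[OF mesh_pos b(2)] grid_subset_vecs by auto
    have "real (l0norm p g) * (3 * Lg / c) \<le> real (l0norm p b) * (3 * Lg / c)"
      using l0norm_net_point_le[of p mesh b] c Lg_ge_1 unfolding g_def
      by (intro mult_right_mono) auto
    then have level: "net_level g \<le> T" using net_level_le[of g] unfolding T_def by linarith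
    have "\<bar>emp_loss n L Z \<omega> g - pop_loss M n L Z g\<bar> = avg_dev n M (\<lambda>i \<omega>. L g (Z i \<omega>)) \<omega>"
      using L_integrable g(2) by (intro abs_emp_minus_pop_loss) blast
    also have "\<dots> \<le> \<sigma> * (sqrt (net_level g / real n) + net_level g / real n)"
      using good \<omega> g(1) by blast
    also have "\<dots> \<le> \<sigma> * (sqrt (T / real n) + T / real n)"
      using \<sigma> level by (intro mult_left_mono add_mono real_sqrt_le_mono divide_right_mono) auto
    finally have "\<bar>emp_loss n L Z \<omega> b - pop_loss M n L Z b\<bar>
        \<le> \<sigma> * (sqrt (T / real n) + T / real n) + 2 / real n"
      using deviation_le_net_point[OF _ _ b] good \<omega> unfolding g_def by fastforce
    then show "\<bar>emp_loss n L Z \<omega> b - pop_loss M n L Z b\<bar> \<le> dev_bound \<sigma> c Lg n_cbrt (real (l0norm p b))"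
      unfolding dev_bound_def n_cbrt(3) T_def .
  qed
qed
lemma lam_nonneg: "a > 0 \<Longrightarrow> lam a \<ge> 0"
  using c \<sigma> Lg_ge_1 n by simp

lemma estimator_event:
  fixes bhat :: "'m \<Rightarrow> nat \<Rightarrow> real"
  assumes a: "0 < a" "a < 1 / UL" and UL: "UL \<ge> 1"
    and S3ONC: "AE \<omega> in M. S3ONC p UL (lam a) a (emp_loss n L Z \<omega>) (bhat \<omega>)"
    and P: "AE \<omega> in M. P \<omega>"
  shows "\<exists>A\<in>sets M. 1 - 2 * (real p + 1) * exp (- c * real n) - 6 * exp (- 2 * c * n_cbrt)
      \<le> measure M A \<and> (\<forall>\<omega>\<in>A. \<omega> \<in> space M \<and> P \<omega> \<and>
      (\<Sum>j<p. Pen (lam a) a \<bar>bhat \<omega> j\<bar>) = real (l0norm p (bhat \<omega>)) * (a * (lam a)\<^sup>2 / 2) \<and>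
      (\<forall>b\<in>vecs p. linfnorm p b \<le> R \<longrightarrow>
        \<bar>emp_loss n L Z \<omega> b - pop_loss M n L Z b\<bar> \<le> dev_bound \<sigma> c Lg n_cbrt (real (l0norm p b))))"
proof -
  obtain A0 where A0: "A0 \<in> sets M" "1 - 2 * exp (- c * real n) - 4 * exp (- 2 * c * n_cbrt) \<le> measure M A0"
    and dev: "\<forall>\<omega>\<in>A0. \<forall>b\<in>vecs p. linfnorm p b \<le> R \<longrightarrow>
      \<bar>emp_loss n L Z \<omega> b - pop_loss M n L Z b\<bar> \<le> dev_bound \<sigma> c Lg n_cbrt (real (l0norm p b))"
    using uniform_deviation_event by blast
  obtain A where A: "A \<in> sets M" "A \<subseteq> A0" "measure M A = measure M A0"
    and AE: "\<forall>\<omega>\<in>A. P \<omega> \<and> S3ONC p UL (lam a) a (emp_loss n L Z \<omega>) (bhat \<omega>)"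
    using AE_refine_event[OF A0(1) AE_conjI[OF P S3ONC]] by blast
  have aUL: "a * UL < 1" using a UL by (simp add: field_simps)
  show ?thesis
  proof (rule bexI[OF _ A(1)], rule conjI)
    have "2 * exp (- c * real n) \<le> 2 * (real p + 1) * exp (- c * real n)" by simp
    then show "1 - 2 * (real p + 1) * exp (- c * real n) - 6 * exp (- 2 * c * n_cbrt) \<le> measure M A"
      using A(3) A0(2) exp_gt_zero[of "- 2 * c * n_cbrt"] by linarith
    show "\<forall>\<omega>\<in>A. \<omega> \<in> space M \<and> P \<omega> \<and>
      (\<Sum>j<p. Pen (lam a) a \<bar>bhat \<omega> j\<bar>) = real (l0norm p (bhat \<omega>)) * (a * (lam a)\<^sup>2 / 2) \<and>
      (\<forall>b\<in>vecs p. linfnorm p b \<le> R \<longrightarrow>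
        \<bar>emp_loss n L Z \<omega> b - pop_loss M n L Z b\<bar> \<le> dev_bound \<sigma> c Lg n_cbrt (real (l0norm p b)))"
      using sets.sets_into_space[OF A(1)] AE dev A(2) S3ONC_penalty_eq[OF a(1) lam_nonneg[OF a(1)] aUL]
      by blast
  qed
qed

lemma excess_risk_penalized:
  fixes bhat :: "'m \<Rightarrow> nat \<Rightarrow> real"
  assumes a: "0 < a" "a < 1 / UL" and UL: "UL \<ge> 1"
    and bhat: "\<forall>\<omega>\<in>space M. bhat \<omega> \<in> vecs p \<and> linfnorm p (bhat \<omega>) \<le> R"
    and S3ONC: "AE \<omega> in M. S3ONC p UL (lam a) a (emp_loss n L Z \<omega>) (bhat \<omega>)"
    and beps: "beps \<in> vecs p" "linfnorm p beps \<le> R" and \<epsilon>: "\<epsilon> \<ge> 0"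
    and approx: "pop_loss M n L Z beps - pop_loss M n L Z bstar \<le> \<epsilon>"
    and \<Gamma>: "\<Gamma> \<ge> 0"
    and compare: "AE \<omega> in M. pen_loss p (lam a) a n L Z \<omega> (bhat \<omega>)
      \<le> pen_loss p (lam a) a n L Z \<omega> beps + \<Gamma>"
  shows "\<exists>A\<in>sets M. 1 - 2 * (real p + 1) * exp (- c * real n) - 6 * exp (- 2 * c * n_cbrt)
      \<le> measure M A \<and> (\<forall>\<omega>\<in>A. pop_loss M n L Z (bhat \<omega>) - pop_loss M n L Z bstar
      \<le> 20 / c * \<sigma> * (real (l0norm p beps) * Lg / real n powr (2 / 3)
          + sqrt (real (l0norm p beps) * Lg / real n) + 1 / n_cbrt)
        + 20 / c * sqrt (\<sigma> * (\<Gamma> + \<epsilon>) / n_cbrt) + \<Gamma> + \<epsilon>)"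
proof -
  obtain A where A: "A \<in> sets M" "1 - 2 * (real p + 1) * exp (- c * real n)
      - 6 * exp (- 2 * c * n_cbrt) \<le> measure M A"
    and good: "\<forall>\<omega>\<in>A. \<omega> \<in> space M \<and>
      pen_loss p (lam a) a n L Z \<omega> (bhat \<omega>) \<le> pen_loss p (lam a) a n L Z \<omega> beps + \<Gamma> \<and>
      (\<Sum>j<p. Pen (lam a) a \<bar>bhat \<omega> j\<bar>) = real (l0norm p (bhat \<omega>)) * (a * (lam a)\<^sup>2 / 2) \<and>
      (\<forall>b\<in>vecs p. linfnorm p b \<le> R \<longrightarrow>
        \<bar>emp_loss n L Z \<omega> b - pop_loss M n L Z b\<bar> \<le> dev_bound \<sigma> c Lg n_cbrt (real (l0norm p b)))"
    using estimator_event[OF a UL S3ONC compare] by blast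
  define \<nu> where "\<nu> = 4 * \<sigma> * Lg / (c * n_cbrt ^ 2)"
  define s where "s = real (l0norm p beps)"
  have "pop_loss M n L Z (bhat \<omega>) - pop_loss M n L Z bstar
      \<le> 20 / c * \<sigma> * (s * Lg / n_cbrt ^ 2 + sqrt (s * Lg / n_cbrt ^ 3) + 1 / n_cbrt)
        + 20 / c * sqrt (\<sigma> * (\<Gamma> + \<epsilon>) / n_cbrt) + \<Gamma> + \<epsilon>" if "\<omega> \<in> A" for \<omega>
  proof (rule excess_bound_penalized[OF c \<sigma> n_cbrt(1) _ _ _ \<Gamma> \<epsilon>])
    define k where "k = real (l0norm p (bhat \<omega>))"
    have \<omega>: "\<omega> \<in> space M" "bhat \<omega> \<in> vecs p" "linfnorm p (bhat \<omega>) \<le> R"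
      using good that bhat by auto
    have "emp_loss n L Z \<omega> (bhat \<omega>) + k * \<nu> \<le> emp_loss n L Z \<omega> beps + s * \<nu> + \<Gamma>"
      using good that penalty_le_l0norm[where p = p and b = beps, OF a(1) lam_nonneg[OF a(1)]]
      unfolding pen_loss_def penalty_level[OF a(1)] k_def s_def \<nu>_def by fastforce
    moreover have "\<bar>emp_loss n L Z \<omega> (bhat \<omega>) - pop_loss M n L Z (bhat \<omega>)\<bar> \<le> dev_bound \<sigma> c Lg n_cbrt k"
      "\<bar>emp_loss n L Z \<omega> beps - pop_loss M n L Z beps\<bar> \<le> dev_bound \<sigma> c Lg n_cbrt s"
      using good that \<omega> beps unfolding k_def s_def by auto
    moreover have "(s - k) * \<nu> = s * \<nu> - k * \<nu>" by (simp add: left_diff_distrib)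
    ultimately show "pop_loss M n L Z (bhat \<omega>) - pop_loss M n L Z bstar
      \<le> dev_bound \<sigma> c Lg n_cbrt k + (s - k) * (4 * \<sigma> * Lg / (c * n_cbrt ^ 2)) + \<Gamma>
        + dev_bound \<sigma> c Lg n_cbrt s + \<epsilon>"
      using approx unfolding \<nu>_def[symmetric] by (simp only: abs_le_iff) linarith
  qed (use Lg_ge_1 s_def in auto)
  then show ?thesis using A unfolding n_cbrt(2,3) s_def by blast
qed

lemma excess_risk_lasso:
  fixes bhat bL1 :: "'m \<Rightarrow> nat \<Rightarrow> real"
  assumes a: "0 < a" "a < 1 / UL" and UL: "UL \<ge> 1"
    and bhat: "\<forall>\<omega>\<in>space M. bhat \<omega> \<in> vecs p \<and> linfnorm p (bhat \<omega>) \<le> R"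
    and S3ONC: "AE \<omega> in M. S3ONC p UL (lam a) a (emp_loss n L Z \<omega>) (bhat \<omega>)"
    and beps: "beps \<in> vecs p" "linfnorm p beps \<le> R" "l0norm p beps \<ge> 1" and \<epsilon>: "\<epsilon> \<ge> 0"
    and approx: "pop_loss M n L Z beps - pop_loss M n L Z bstar \<le> \<epsilon>"
    and lasso: "\<forall>\<omega>\<in>space M. bL1 \<omega> \<in> vecs p \<and>
      (\<forall>b\<in>vecs p. emp_loss n L Z \<omega> (bL1 \<omega>) + lam a * l1norm p (bL1 \<omega>)
        \<le> emp_loss n L Z \<omega> b + lam a * l1norm p b)"
    and compare: "AE \<omega> in M. pen_loss p (lam a) a n L Z \<omega> (bhat \<omega>)
      \<le> pen_loss p (lam a) a n L Z \<omega> (bL1 \<omega>)"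
  shows "\<exists>A\<in>sets M. 1 - 2 * (real p + 1) * exp (- c * real n) - 6 * exp (- 2 * c * n_cbrt)
      \<le> measure M A \<and> (\<forall>\<omega>\<in>A. pop_loss M n L Z (bhat \<omega>) - pop_loss M n L Z bstar
      \<le> 20 / c * a powr (- 1 / 2) * real (l0norm p beps) * \<sigma>
          * (Lg / real n powr (2 / 3) + R * sqrt Lg / n_cbrt)
        + 20 / c * sqrt (\<sigma> * \<epsilon> / n_cbrt) + \<epsilon>)"
proof -
  obtain A where A: "A \<in> sets M" "1 - 2 * (real p + 1) * exp (- c * real n)
      - 6 * exp (- 2 * c * n_cbrt) \<le> measure M A"
    and good: "\<forall>\<omega>\<in>A. \<omega> \<in> space M \<and>
      pen_loss p (lam a) a n L Z \<omega> (bhat \<omega>) \<le> pen_loss p (lam a) a n L Z \<omega> (bL1 \<omega>) \<and>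
      (\<Sum>j<p. Pen (lam a) a \<bar>bhat \<omega> j\<bar>) = real (l0norm p (bhat \<omega>)) * (a * (lam a)\<^sup>2 / 2) \<and>
      (\<forall>b\<in>vecs p. linfnorm p b \<le> R \<longrightarrow>
        \<bar>emp_loss n L Z \<omega> b - pop_loss M n L Z b\<bar> \<le> dev_bound \<sigma> c Lg n_cbrt (real (l0norm p b)))"
    using estimator_event[OF a UL S3ONC compare] by blast
  define \<nu> where "\<nu> = 4 * \<sigma> * Lg / (c * n_cbrt ^ 2)"
  define s where "s = real (l0norm p beps)"
  have lam: "lam a = sqrt (8 * \<sigma> / (c * a * n_cbrt ^ 2) * Lg)" unfolding n_cbrt(2) ..
  have l1_beps: "lam a * l1norm p beps \<le> lam a * (s * R)"
  proof (rule mult_left_mono[OF _ lam_nonneg[OF a(1)]])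
    show "l1norm p beps \<le> s * R"
      using l1norm_le_l0norm_linfnorm[of p beps] mult_left_mono[OF beps(2), of s]
      unfolding s_def by simp
  qed
  have "pop_loss M n L Z (bhat \<omega>) - pop_loss M n L Z bstar
      \<le> 20 / c * a powr (- 1 / 2) * s * \<sigma> * (Lg / n_cbrt ^ 2 + R * sqrt Lg / n_cbrt)
        + 20 / c * sqrt (\<sigma> * \<epsilon> / n_cbrt) + \<epsilon>" if "\<omega> \<in> A" for \<omega>
  proof (rule excess_bound_lasso[OF c \<sigma> n_cbrt(1) Lg_ge_1 _ _ \<epsilon> a(1) _ R])
    define k where "k = real (l0norm p (bhat \<omega>))"
    have \<omega>: "\<omega> \<in> space M" "bhat \<omega> \<in> vecs p" "linfnorm p (bhat \<omega>) \<le> R"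
      using good that bhat by auto
    have "emp_loss n L Z \<omega> (bhat \<omega>) + k * \<nu>
        \<le> emp_loss n L Z \<omega> (bL1 \<omega>) + (\<Sum>j<p. Pen (lam a) a \<bar>bL1 \<omega> j\<bar>)"
      using good that unfolding pen_loss_def penalty_level[OF a(1)] k_def \<nu>_def by fastforce
    also have "\<dots> \<le> emp_loss n L Z \<omega> (bL1 \<omega>) + lam a * l1norm p (bL1 \<omega>)"
      using penalty_le_l1norm[OF a(1) lam_nonneg[OF a(1)]] by simp
    also have "\<dots> \<le> emp_loss n L Z \<omega> beps + lam a * (s * R)"
      using lasso \<omega>(1) beps(1) l1_beps by fastforce
    finally have "emp_loss n L Z \<omega> (bhat \<omega>) + k * \<nu> \<le> emp_loss n L Z \<omega> beps + lam a * (s * R)" .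
    moreover have "\<bar>emp_loss n L Z \<omega> (bhat \<omega>) - pop_loss M n L Z (bhat \<omega>)\<bar> \<le> dev_bound \<sigma> c Lg n_cbrt k"
      "\<bar>emp_loss n L Z \<omega> beps - pop_loss M n L Z beps\<bar> \<le> dev_bound \<sigma> c Lg n_cbrt s"
      using good that \<omega> beps unfolding k_def s_def by auto
    ultimately show "pop_loss M n L Z (bhat \<omega>) - pop_loss M n L Z bstar
      \<le> dev_bound \<sigma> c Lg n_cbrt k + sqrt (8 * \<sigma> / (c * a * n_cbrt ^ 2) * Lg) * (s * R)
        - k * (4 * \<sigma> * Lg / (c * n_cbrt ^ 2)) + dev_bound \<sigma> c Lg n_cbrt s + \<epsilon>"
      using approx unfolding \<nu>_def[symmetric] lam[symmetric] by (simp only: abs_le_iff) linarith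
    have "a * 1 \<le> a * UL" using a UL by (intro mult_left_mono) auto
    moreover have "a * UL < 1" using a UL by (simp add: field_simps)
    ultimately show "a \<le> 1" by linarith
  qed (use beps(3) s_def in auto)
  then show ?thesis using A unfolding n_cbrt(2,3) s_def by blast
qed

end

theorem theorem1:
  shows "\<forall>c::real. 0 < c \<and> c \<le> 1/2 \<longrightarrow>
   (\<exists>ct C3 C4 :: real. ct > 0 \<and> C3 > 0 \<and> C4 > 0 \<and>
    (\<forall>(M :: 'm measure) (Z :: nat \<Rightarrow> 'm \<Rightarrow> (nat \<Rightarrow> real))
       (L :: (nat \<Rightarrow> real) \<Rightarrow> (nat \<Rightarrow> real) \<Rightarrow> real) (Cf :: (nat \<Rightarrow> real) \<Rightarrow> real)
       (n :: nat) (p :: nat) (q :: nat) (R :: real) (\<sigma> :: real) (\<sigma>L :: real) (C\<mu> :: real)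
       (UL :: real) (a :: real) (\<epsilon> :: real)
       (bstar :: nat \<Rightarrow> real) (beps :: nat \<Rightarrow> real) (bhat :: 'm \<Rightarrow> nat \<Rightarrow> real).
     let LL = pop_loss M n L Z;
         s = l0norm p beps;
         \<zeta> = ln (3 * exp 1 * R * (\<sigma>L + C\<mu>));
         Lg = ln (real n powr (1/3) * real p) + \<zeta>;
         lam = sqrt (8 * \<sigma> / (c * a * real n powr (2/3)) * Lg);
         prb = 1 - 2 * (real p + 1) * exp (- ct * real n) - 6 * exp (- 2 * c * real n powr (1/3))
     in
     ( prob_space M \<and> p > 2 \<and> n \<ge> 1 \<and>
       \<comment> \<open>i.i.d. samples with support in R^q\<close>
       (\<forall>i<n. Z i \<in> measurable M borel) \<and>
       (\<forall>i<n. \<forall>\<omega>\<in>space M. Z i \<omega> \<in> vecs q) \<and>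
       prob_space.indep_vars M (\<lambda>_. borel) Z {..<n} \<and>
       (\<forall>i<n. distr M borel (Z i) = distr M borel (Z 0)) \<and>
       \<comment> \<open>the loss\<close>
       (\<lambda>(b, z). L b z) \<in> borel_measurable (borel \<Otimes>\<^sub>M borel) \<and>
       (\<forall>i<n. \<forall>b\<in>vecs p. integrable M (\<lambda>\<omega>. L b (Z i \<omega>))) \<and>
       \<comment> \<open>the population minimizer\<close>
       R \<ge> 1 \<and> bstar \<in> vecs p \<and> (\<forall>b\<in>vecs p. LL bstar \<le> LL b) \<and> linfnorm p bstar \<le> R \<and>
       \<comment> \<open>smoothness\<close>
       UL \<ge> 1 \<and>
       (\<forall>i<n. AE \<omega> in M. C1_vecs p (\<lambda>b. L b (Z i \<omega>)) \<and>
          (\<forall>b\<in>vecs p. \<forall>\<delta>. \<forall>j<p.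
             \<bar>partial_deriv (\<lambda>b. L b (Z i \<omega>)) (b(j := b j + \<delta>)) j
              - partial_deriv (\<lambda>b. L b (Z i \<omega>)) b j\<bar> \<le> UL * \<bar>\<delta>\<bar>)) \<and>
       \<comment> \<open>(A1)\<close>
       beps \<in> vecs p \<and> linfnorm p beps \<le> R \<and> s \<ge> 1 \<and> \<epsilon> \<ge> 0 \<and> LL beps - LL bstar \<le> \<epsilon> \<and>
       \<comment> \<open>(A2)\<close>
       \<sigma> \<ge> 1 \<and>
       (\<forall>b\<in>vecs p. \<forall>i<n.
          psi1_norm M (\<lambda>\<omega>. L b (Z i \<omega>) - (\<integral>\<omega>'. L b (Z i \<omega>') \<partial>M)) \<le> ereal \<sigma>) \<and>
       (\<forall>b\<in>vecs p. \<forall>t\<ge>0. \<forall>v :: nat \<Rightarrow> real.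
          measure M {\<omega>\<in>space M. \<bar>\<Sum>i<n. v i * (L b (Z i \<omega>) - (\<integral>\<omega>'. L b (Z i \<omega>') \<partial>M))\<bar>
             > \<sigma> * (sqrt (\<Sum>i<n. (v i)\<^sup>2) * sqrt t + Max ((\<lambda>i. \<bar>v i\<bar>) ` {..<n}) * t)}
          \<le> 2 * exp (- c * t)) \<and>
       \<comment> \<open>(A3)\<close>
       Cf \<in> borel_measurable borel \<and> (\<forall>z. Cf z \<ge> 0) \<and> \<sigma>L \<ge> 1 \<and> C\<mu> \<ge> 1 \<and>
       (\<forall>i<n. integrable M (\<lambda>\<omega>. Cf (Z i \<omega>))) \<and>
       (\<forall>i<n. psi1_norm M (\<lambda>\<omega>. Cf (Z i \<omega>) - (\<integral>\<omega>'. Cf (Z i \<omega>') \<partial>M)) \<le> ereal \<sigma>L) \<and>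
       (\<forall>i<n. (\<integral>\<omega>. \<bar>Cf (Z i \<omega>)\<bar> \<partial>M) \<le> C\<mu>) \<and>
       (\<forall>t\<ge>0. \<forall>v :: nat \<Rightarrow> real.
          measure M {\<omega>\<in>space M. \<bar>\<Sum>i<n. v i * (Cf (Z i \<omega>) - (\<integral>\<omega>'. Cf (Z i \<omega>') \<partial>M))\<bar>
             > \<sigma>L * (sqrt (\<Sum>i<n. (v i)\<^sup>2) * sqrt t + Max ((\<lambda>i. \<bar>v i\<bar>) ` {..<n}) * t)}
          \<le> 2 * exp (- c * t)) \<and>
       (\<forall>i<n. AE \<omega> in M. \<forall>b1\<in>vecs p. \<forall>b2\<in>vecs p.
          \<bar>L b1 (Z i \<omega>) - L b2 (Z i \<omega>)\<bar> \<le> Cf (Z i \<omega>) * l2norm p (\<lambda>k. b1 k - b2 k)) \<and>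
       \<comment> \<open>tuning parameter and the estimator\<close>
       a > 0 \<and> a < 1 / UL \<and>
       (\<forall>\<omega>\<in>space M. bhat \<omega> \<in> vecs p \<and> linfnorm p (bhat \<omega>) \<le> R) \<and>
       (AE \<omega> in M. S3ONC p UL lam a (emp_loss n L Z \<omega>) (bhat \<omega>)) )
     \<longrightarrow>
     \<comment> \<open>(i)\<close>
     (\<forall>\<Gamma>\<ge>0.
        real n > C3 * (((\<Gamma> + \<epsilon>) / \<sigma>) ^ 3 + real s * Lg) \<and>
        (AE \<omega> in M. pen_loss p lam a n L Z \<omega> (bhat \<omega>) \<le> pen_loss p lam a n L Z \<omega> beps + \<Gamma>)
        \<longrightarrow>
        (\<exists>A\<in>sets M. measure M A \<ge> prb \<and>
           (\<forall>\<omega>\<in>A. LL (bhat \<omega>) - LL bstar \<le>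
              C3 * \<sigma> * (real s * Lg / real n powr (2/3) + sqrt (real s * Lg / real n)
                          + 1 / real n powr (1/3))
              + C3 * sqrt (\<sigma> * (\<Gamma> + \<epsilon>) / real n powr (1/3)) + \<Gamma> + \<epsilon>))) \<and>
     \<comment> \<open>(ii)\<close>
     (\<forall>bL1 :: 'm \<Rightarrow> nat \<Rightarrow> real.
        (\<forall>\<omega>\<in>space M. bL1 \<omega> \<in> vecs p \<and>
           (\<forall>b\<in>vecs p. emp_loss n L Z \<omega> (bL1 \<omega>) + lam * l1norm p (bL1 \<omega>)
                        \<le> emp_loss n L Z \<omega> b + lam * l1norm p b)) \<and>
        real n > C4 * (\<epsilon> / \<sigma>) ^ 3 + C4 * (1 / a) * Lg * real s powr (3/2) * R powr (3/2) \<and>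
        (AE \<omega> in M. pen_loss p lam a n L Z \<omega> (bhat \<omega>) \<le> pen_loss p lam a n L Z \<omega> (bL1 \<omega>))
        \<longrightarrow>
        (\<exists>A\<in>sets M. measure M A \<ge> prb \<and>
           (\<forall>\<omega>\<in>A. LL (bhat \<omega>) - LL bstar \<le>
              C4 * a powr (-1/2) * real s * \<sigma> * (Lg / real n powr (2/3) + R * sqrt Lg / real n powr (1/3))
              + C4 * sqrt (\<sigma> * \<epsilon> / real n powr (1/3)) + \<epsilon>)))))"
  apply (intro allI impI)
  subgoal for c
    apply (rule exI[of _ c], rule exI[of _ "20 / c"], rule exI[of _ "20 / c"])
    apply (intro conjI allI, simp, simp, simp)
    apply (unfold Let_def)
    apply (intro impI conjI allI)
     apply (elim conjE)
     apply (rule sparse_erm_setting.excess_risk_penalized[OF sparse_erm_setting.intro]; assumption)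
    apply (elim conjE)
    apply (rule sparse_erm_setting.excess_risk_lasso[OF sparse_erm_setting.intro]; assumption)
    done
  done

end
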